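(* Let $d\ge2$. There are constants (depending only on the indicated quantities) such that for all $n\ge0$ and vertices: (i) $p^{\mathbb G_o}_n(\mathtt y_0,\mathtt y)\le e^{-c(d)n}$ for all $\mathtt y_0,\mathtt y\in\mathbb G_o$; (ii) $p^{\mathbb G_\lozenge}_n(\mathtt y_0,\mathtt y)\le n^{-3/5}+c(d,|\mathtt y|)\exp\{-c'(d,|\mathtt y|)n^{c(d)}\}$ for all $\mathtt y_0,\mathtt y\in\mathbb G_\lozenge$, $n\ge1$; (iii) $p^{G_N}_n(y_0,y)\le c\,e^{-c(d)d(y_0,y)}1_{\{n\le N^3\}}+c(d)\big(d^{-N}+n^{-3/5}\big)1_{\{n>N^3\}}$ for all $N$ and $y_0,y\in G_N$.
   Context: $p^{\mathcal G}_n$ denotes the $n$-step transition probability of the random walk on $\mathcal G$ (transition probabilities $w_{y,y'}/w_y$; here all edges have weight $1/2$). $\mathbb G_o$ is the infinite $(d+1)$-regular tree with root $o$; $G_N$ is the ball of radius $N$ around $o$ in $\mathbb G_o$ (induced edges), $d(\cdot,\cdot)$ the graph distance. $\mathbb G_\lozenge$ has vertices $(k;s)$ with $k\ge0$ and $s=(s_1,s_2,\dots)\in\{1,\dots,d\}^{\mathbb N}$ having finitely many terms $\ne1$, and an edge between $(k;s)$ and $(k+1;s')$ whenever $s_{n+1}=s'_n$ for all $n\ge1$; the height of $(k;s)$ is $|(k;s)|=k$. *)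

theory Defs
  imports Complex_Main
begin

definition nbrs :: "('a \<Rightarrow> 'a \<Rightarrow> bool) \<Rightarrow> 'a \<Rightarrow> 'a set" where
  "nbrs E x = {z. E x z}"

definition edge_weight :: "('a \<Rightarrow> 'a \<Rightarrow> bool) \<Rightarrow> 'a \<Rightarrow> 'a \<Rightarrow> real" where
  "edge_weight E x z = (if E x z then 1/2 else 0)"

definition vertex_weight :: "('a \<Rightarrow> 'a \<Rightarrow> bool) \<Rightarrow> 'a \<Rightarrow> real" where
  "vertex_weight E x = (\<Sum>z\<in>nbrs E x. edge_weight E x z)"

definition trans_prob :: "('a \<Rightarrow> 'a \<Rightarrow> bool) \<Rightarrow> 'a \<Rightarrow> 'a \<Rightarrow> real" where
  "trans_prob E x z = edge_weight E x z / vertex_weight E x"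

fun rw_prob :: "('a \<Rightarrow> 'a \<Rightarrow> bool) \<Rightarrow> nat \<Rightarrow> 'a \<Rightarrow> 'a \<Rightarrow> real" where
  "rw_prob E 0 x y = (if x = y then 1 else 0)"
| "rw_prob E (Suc n) x y = (\<Sum>z\<in>nbrs E x. trans_prob E x z * rw_prob E n z y)"

definition graph_dist :: "('a \<Rightarrow> 'a \<Rightarrow> bool) \<Rightarrow> 'a \<Rightarrow> 'a \<Rightarrow> nat" where
  "graph_dist E x y = (LEAST k. (E ^^ k) x y)"

text \<open>Vertices are lists of digits: [] is the root o; a#v is a child of v.
  The last digit (the child of the root) ranges over {0..d} (d+1 children of the root),
  all other digits over {0..<d} (d children of every non-root vertex).\<close>

definition tree_vert :: "nat \<Rightarrow> nat list \<Rightarrow> bool" where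
  "tree_vert d v \<longleftrightarrow> v = [] \<or> (last v \<le> d \<and> (\<forall>x\<in>set (butlast v). x < d))"

definition tree_edge :: "nat \<Rightarrow> nat list \<Rightarrow> nat list \<Rightarrow> bool" where
  "tree_edge d u v \<longleftrightarrow> tree_vert d u \<and> tree_vert d v \<and>
     ((\<exists>a. u = a # v) \<or> (\<exists>a. v = a # u))"

text \<open>G_N: the ball of radius N around o (= []) with induced edges.
  Since G_o is a tree, d(o,v) = length v.\<close>
definition ball_vert :: "nat \<Rightarrow> nat \<Rightarrow> nat list \<Rightarrow> bool" where
  "ball_vert d N v \<longleftrightarrow> tree_vert d v \<and> graph_dist (tree_edge d) [] v \<le> N"

definition ball_edge :: "nat \<Rightarrow> nat \<Rightarrow> nat list \<Rightarrow> nat list \<Rightarrow> bool" where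
  "ball_edge d N u v \<longleftrightarrow> tree_edge d u v \<and> ball_vert d N u \<and> ball_vert d N v"

text \<open>Vertices (k; s), s = (s_1, s_2, ...) encoded as a function with s i = s_{i+1}.\<close>
definition dia_vert :: "nat \<Rightarrow> nat \<times> (nat \<Rightarrow> nat) \<Rightarrow> bool" where
  "dia_vert d y \<longleftrightarrow> (\<forall>i. 1 \<le> snd y i \<and> snd y i \<le> d) \<and> finite {i. snd y i \<noteq> 1}"

definition dia_up :: "nat \<times> (nat \<Rightarrow> nat) \<Rightarrow> nat \<times> (nat \<Rightarrow> nat) \<Rightarrow> bool" where
  "dia_up y y' \<longleftrightarrow> fst y' = Suc (fst y) \<and> (\<forall>n. snd y (Suc n) = snd y' n)"

definition dia_edge :: "nat \<Rightarrow> nat \<times> (nat \<Rightarrow> nat) \<Rightarrow> nat \<times> (nat \<Rightarrow> nat) \<Rightarrow> bool" where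
  "dia_edge d y y' \<longleftrightarrow> dia_vert d y \<and> dia_vert d y' \<and> (dia_up y y' \<or> dia_up y' y)"

end

theory Submission
  imports Defs "HOL-Combinatorics.Transposition" "HOL-Real_Asymp.Real_Asymp"
begin

text \<open>Two mechanisms give all three bounds. First, potentials: (2/3) ^ dist(-,y) on the tree and
  (3/2) ^ (N - height) on the ball G_N shrink by the factor (4d+9)/(6(d+1)) < 1 under a step of
  the walk; this is the exponential decay in (i), and it drives the walk on G_N to the leaves.
  Second, symmetry: digit permutations on the levels below (G_N) or above (G\<lozenge>) a fixed vertex x
  are automorphisms fixing x, so all vertices of the level of y that agree with y near the root
  (near height L for G\<lozenge>) are equally likely, and p_n(x,y) is at most one over their number.
  In G\<lozenge> and G_N some edge of probability at least 1/(d+1) leads one level towards the region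
  where the symmetry bound is good, so the walk gets there within n steps unless an event of
  probability (1 - (d+1)^-K)^(n/K) occurs; a cut-off K \<approx> 0.99 log n / log (d+1) makes both errors
  smaller than n^(-3/5). For times n \<le> N^3 the walk from x must first leave the branch of x
  below the last common ancestor with y, and reversibility gives the same bound from the side of
  y, which yields the decay in the distance.\<close>

section \<open>Random walks\<close>

lemma trans_prob_eq: "trans_prob E x z = (if E x z then 1 / real (card (nbrs E x)) else 0)"
proof -
  have "vertex_weight E x = (\<Sum>z\<in>nbrs E x. 1/2)"
    unfolding vertex_weight_def by (rule sum.cong) (auto simp: edge_weight_def nbrs_def)
  then show ?thesis by (auto simp: trans_prob_def edge_weight_def)
qed

lemma trans_prob_nonneg: "0 \<le> trans_prob E x z"
  by (simp add: trans_prob_eq)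

lemma sum_trans_prob_le_1: "(\<Sum>z\<in>nbrs E x. trans_prob E x z) \<le> 1"
proof -
  have "(\<Sum>z\<in>nbrs E x. trans_prob E x z) = real (card (nbrs E x)) * (1 / real (card (nbrs E x)))"
    by (simp add: trans_prob_eq nbrs_def)
  also have "\<dots> \<le> 1" by (cases "card (nbrs E x) = 0") auto
  finally show ?thesis .
qed

lemma trans_prob_ge:
  assumes "E x z" "finite (nbrs E x)" "card (nbrs E x) \<le> k"
  shows "1 / real k \<le> trans_prob E x z"
proof -
  have "card (nbrs E x) > 0" using assms(1,2) by (auto simp: card_gt_0_iff nbrs_def)
  then show ?thesis using assms by (simp add: trans_prob_eq frac_le)
qed

lemma average_le:
  assumes "\<And>z. z \<in> nbrs E x \<Longrightarrow> f z \<le> M" "0 \<le> M"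
  shows "(\<Sum>z\<in>nbrs E x. trans_prob E x z * f z) \<le> M"
proof -
  have "(\<Sum>z\<in>nbrs E x. trans_prob E x z * f z) \<le> (\<Sum>z\<in>nbrs E x. trans_prob E x z * M)"
    by (intro sum_mono mult_left_mono assms trans_prob_nonneg)
  also have "\<dots> = M * (\<Sum>z\<in>nbrs E x. trans_prob E x z)" by (simp add: sum_distrib_left mult.commute)
  also have "\<dots> \<le> M" by (rule mult_left_le[OF sum_trans_prob_le_1 assms(2)])
  finally show ?thesis .
qed

lemma rw_prob_nonneg: "0 \<le> rw_prob E n x y"
  by (induction n arbitrary: x) (auto intro!: sum_nonneg mult_nonneg_nonneg trans_prob_nonneg)

lemma sum_rw_prob_le_1: "finite W \<Longrightarrow> (\<Sum>w\<in>W. rw_prob E n x w) \<le> 1"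
proof (induction n arbitrary: x)
  case 0
  then show ?case by (simp add: sum.delta)
next
  case (Suc n)
  have "(\<Sum>w\<in>W. rw_prob E (Suc n) x w) = (\<Sum>z\<in>nbrs E x. trans_prob E x z * (\<Sum>w\<in>W. rw_prob E n z w))"
    by (simp add: sum_distrib_left sum.swap[of _ W])
  also have "\<dots> \<le> 1" by (intro average_le Suc) simp
  finally show ?case .
qed

lemma rw_prob_le_1: "rw_prob E n x y \<le> 1"
  using sum_rw_prob_le_1[of "{y}" E n x] by simp

lemma rw_prob_isolated: "nbrs E x = {} \<Longrightarrow> x \<noteq> y \<Longrightarrow> rw_prob E n x y = 0"
  by (cases n) auto

lemma rw_prob_involution:
  assumes inv: "\<And>a. \<sigma> (\<sigma> a) = a" and E: "\<And>a b. E (\<sigma> a) (\<sigma> b) = E a b"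
  shows "rw_prob E n (\<sigma> x) (\<sigma> y) = rw_prob E n x y"
proof (induction n arbitrary: x)
  case 0
  then show ?case by (metis inv rw_prob.simps(1))
next
  case (Suc n)
  have inj: "inj \<sigma>" by (metis inv injI)
  have nbrs: "nbrs E (\<sigma> x) = \<sigma> ` nbrs E x"
    unfolding nbrs_def by (auto simp: image_iff) (metis E inv)+
  have card: "card (nbrs E (\<sigma> x)) = card (nbrs E x)"
    unfolding nbrs by (rule card_image) (use inj in \<open>auto simp: inj_on_def\<close>)
  have "rw_prob E (Suc n) (\<sigma> x) (\<sigma> y)
      = (\<Sum>z\<in>nbrs E x. trans_prob E (\<sigma> x) (\<sigma> z) * rw_prob E n (\<sigma> z) (\<sigma> y))"
    by (simp add: nbrs sum.reindex[OF inj_on_subset[OF inj]])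
  also have "\<dots> = rw_prob E (Suc n) x y"
    by (auto simp: Suc trans_prob_eq card E intro!: sum.cong)
  finally show ?case .
qed

lemma card_mult_rw_prob_le:
  assumes "finite S" "W \<subseteq> S"
    and sym: "\<And>w. w \<in> W \<Longrightarrow> \<exists>\<sigma>. (\<forall>a. \<sigma> (\<sigma> a) = a) \<and> (\<forall>a b. E (\<sigma> a) (\<sigma> b) = E a b) \<and>
                                \<sigma> x = x \<and> \<sigma> y = w"
  shows "real (card W) * rw_prob E n x y \<le> (\<Sum>w\<in>S. rw_prob E n x w)"
proof -
  have "rw_prob E n x w = rw_prob E n x y" if "w \<in> W" for w
    using sym[OF that] rw_prob_involution by metis
  then have "real (card W) * rw_prob E n x y = (\<Sum>w\<in>W. rw_prob E n x w)" by simp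
  also have "\<dots> \<le> (\<Sum>w\<in>S. rw_prob E n x w)"
    by (rule sum_mono2[OF assms(1,2)]) (simp add: rw_prob_nonneg)
  finally show ?thesis .
qed

lemma rw_prob_Suc_right:
  assumes sym: "\<And>a b. E a b = E b a" and fin: "\<And>a. finite (nbrs E a)"
  shows "rw_prob E (Suc n) x y = (\<Sum>z\<in>nbrs E y. rw_prob E n x z * trans_prob E z y)"
proof (induction n arbitrary: x)
  case 0
  have "rw_prob E (Suc 0) x y = (\<Sum>z\<in>nbrs E x. if z = y then trans_prob E x z else 0)"
    by (auto intro: sum.cong)
  also have "\<dots> = (\<Sum>z\<in>nbrs E y. if z = x then trans_prob E z y else 0)"
    using fin[of x] fin[of y] by (simp add: sum.delta nbrs_def sym[of x y])
  also have "\<dots> = (\<Sum>z\<in>nbrs E y. rw_prob E 0 x z * trans_prob E z y)"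
    by (auto intro: sum.cong)
  finally show ?case .
next
  case (Suc n)
  have "rw_prob E (Suc (Suc n)) x y
      = (\<Sum>z\<in>nbrs E x. trans_prob E x z * (\<Sum>u\<in>nbrs E y. rw_prob E n z u * trans_prob E u y))"
    by (subst rw_prob.simps(2)) (simp only: Suc.IH)
  also have "\<dots> = (\<Sum>u\<in>nbrs E y. rw_prob E (Suc n) x u * trans_prob E u y)"
    by (simp add: sum_distrib_left sum_distrib_right sum.swap[of _ "nbrs E y"] algebra_simps)
  finally show ?case .
qed

lemma rw_prob_reversible:
  assumes sym: "\<And>a b. E a b = E b a" and fin: "\<And>a. finite (nbrs E a)"
  shows "rw_prob E n x y * card (nbrs E x) = rw_prob E n y x * card (nbrs E y)"
proof (induction n arbitrary: x y)
  case 0 then show ?case by auto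
next
  case (Suc n)
  have deg_pos: "card (nbrs E a) > 0" if "E a b" for a b
    using fin that by (auto simp: card_gt_0_iff nbrs_def)
  have "rw_prob E (Suc n) x y * card (nbrs E x) = (\<Sum>z\<in>nbrs E x. rw_prob E n z y)"
    unfolding rw_prob.simps sum_distrib_right
    by (rule sum.cong) (auto simp: trans_prob_eq nbrs_def dest!: deg_pos)
  also have "\<dots> = (\<Sum>z\<in>nbrs E x. card (nbrs E y) * (rw_prob E n y z * trans_prob E z x))"
  proof (rule sum.cong)
    fix z assume "z \<in> nbrs E x"
    then have "E z x" using sym by (simp add: nbrs_def)
    then show "rw_prob E n z y = card (nbrs E y) * (rw_prob E n y z * trans_prob E z x)"
      using Suc.IH[of z y] deg_pos[of z x] by (simp add: trans_prob_eq field_simps)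
  qed simp
  also have "\<dots> = card (nbrs E y) * rw_prob E (Suc n) y x"
    by (simp only: rw_prob_Suc_right[OF sym fin, of n y x] sum_distrib_left)
  finally show ?case by simp
qed

fun avoid_prob :: "('a \<Rightarrow> 'a \<Rightarrow> bool) \<Rightarrow> 'a set \<Rightarrow> nat \<Rightarrow> 'a \<Rightarrow> real" where
  "avoid_prob E R 0 x = (if x \<in> R then 0 else 1)"
| "avoid_prob E R (Suc n) x =
     (if x \<in> R then 0 else (\<Sum>z\<in>nbrs E x. trans_prob E x z * avoid_prob E R n z))"

lemma avoid_prob_in: "x \<in> R \<Longrightarrow> avoid_prob E R n x = 0"
  by (cases n) auto

lemma avoid_prob_le_1: "avoid_prob E R n x \<le> 1"
  by (induction n arbitrary: x) (auto intro: average_le)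

lemma le_plus_avoid_prob:
  assumes step: "\<And>t x. F (Suc t) x \<le> (\<Sum>z\<in>nbrs E x. trans_prob E x z * F t z)"
    and le_1: "\<And>t x. F t x \<le> 1"
    and on_R: "\<And>t v. v \<in> R \<Longrightarrow> F t v \<le> c" and "0 \<le> c"
  shows "F n x \<le> c + avoid_prob E R n x"
proof (induction n arbitrary: x)
  case 0
  then show ?case using on_R le_1 \<open>0 \<le> c\<close> by (cases "x \<in> R") (auto simp: add_increasing)
next
  case (Suc n)
  show ?case
  proof (cases "x \<in> R")
    case True then show ?thesis using on_R by simp
  next
    case False
    have "F (Suc n) x \<le> (\<Sum>z\<in>nbrs E x. trans_prob E x z * (c + avoid_prob E R n z))"
      using step[of n x] by (meson Suc mult_left_mono order_trans sum_mono trans_prob_nonneg)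
    also have "\<dots> = c * (\<Sum>z\<in>nbrs E x. trans_prob E x z)
                   + (\<Sum>z\<in>nbrs E x. trans_prob E x z * avoid_prob E R n z)"
      by (simp add: distrib_left sum.distrib sum_distrib_left mult.commute)
    also have "\<dots> \<le> c + avoid_prob E R (Suc n) x"
      using False mult_left_le[OF sum_trans_prob_le_1 \<open>0 \<le> c\<close>] by simp
    finally show ?thesis .
  qed
qed

lemma rw_prob_le_exit_bound:
  assumes on_R: "\<And>v t. v \<in> R \<Longrightarrow> rw_prob E t v y \<le> c" and "0 \<le> c"
    and "y \<notin> \<Omega>" and exits: "\<And>v z. v \<in> \<Omega> \<Longrightarrow> E v z \<Longrightarrow> z \<in> \<Omega> \<or> z \<in> R"
  shows "x \<in> \<Omega> \<Longrightarrow> rw_prob E n x y \<le> c"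
proof (induction n arbitrary: x)
  case 0 then show ?case using assms by auto
next
  case (Suc n)
  have "rw_prob E n z y \<le> c" if "z \<in> nbrs E x" for z
    using exits[OF Suc.prems] that Suc.IH on_R by (auto simp: nbrs_def)
  then show ?case using \<open>0 \<le> c\<close> by (simp add: average_le)
qed

lemma potential_decay:
  assumes closed: "\<And>x z. x \<in> V \<Longrightarrow> E x z \<Longrightarrow> z \<in> V"
    and step: "\<And>t x. x \<in> V \<Longrightarrow> x \<notin> R \<Longrightarrow> F (Suc t) x \<le> (\<Sum>z\<in>nbrs E x. trans_prob E x z * F t z)"
    and on_R: "\<And>t x. x \<in> R \<Longrightarrow> F t x \<le> 0"
    and init: "\<And>x. x \<in> V \<Longrightarrow> F 0 x \<le> g x"
    and pot: "\<And>x. x \<in> V \<Longrightarrow> x \<notin> R \<Longrightarrow> (\<Sum>z\<in>nbrs E x. trans_prob E x z * g z) \<le> \<theta> * g x"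
    and g: "\<And>x. x \<in> V \<Longrightarrow> 0 \<le> g x" and "0 \<le> \<theta>"
  shows "x \<in> V \<Longrightarrow> F n x \<le> \<theta> ^ n * g x"
proof (induction n arbitrary: x)
  case 0 then show ?case using init by simp
next
  case (Suc n)
  show ?case
  proof (cases "x \<in> R")
    case True
    then show ?thesis
      using on_R g[OF Suc.prems] \<open>0 \<le> \<theta>\<close> by (meson order_trans mult_nonneg_nonneg zero_le_power)
  next
    case False
    have "F (Suc n) x \<le> (\<Sum>z\<in>nbrs E x. trans_prob E x z * (\<theta> ^ n * g z))"
      using step[OF Suc.prems False]
      by (rule order_trans, intro sum_mono mult_left_mono trans_prob_nonneg Suc.IH)
         (use closed Suc.prems in \<open>auto simp: nbrs_def\<close>)
    also have "\<dots> = \<theta> ^ n * (\<Sum>z\<in>nbrs E x. trans_prob E x z * g z)"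
      by (simp add: sum_distrib_left algebra_simps)
    also have "\<dots> \<le> \<theta> ^ Suc n * g x"
      using mult_left_mono[OF pot[OF Suc.prems False], of "\<theta> ^ n"] \<open>0 \<le> \<theta>\<close> by (simp add: ac_simps)
    finally show ?thesis .
  qed
qed

lemma avoid_prob_Suc_le_deficit:
  assumes "x \<notin> R" "finite (nbrs E x)" "E x u"
    and le_M: "\<And>z. z \<in> nbrs E x \<Longrightarrow> avoid_prob E R n z \<le> M" and "avoid_prob E R n u \<le> M - \<delta>"
    and "0 \<le> M"
  shows "avoid_prob E R (Suc n) x \<le> M - trans_prob E x u * \<delta>"
proof -
  have u: "u \<in> nbrs E x" using assms(3) by (simp add: nbrs_def)
  have "avoid_prob E R (Suc n) x
      \<le> (\<Sum>z\<in>nbrs E x. trans_prob E x z * (M - (if z = u then \<delta> else 0)))"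
    using assms(1,5) le_M by (auto intro!: sum_mono mult_left_mono trans_prob_nonneg)
  also have "\<dots> = M * (\<Sum>z\<in>nbrs E x. trans_prob E x z) - trans_prob E x u * \<delta>"
    using assms(2) u by (simp add: right_diff_distrib sum_subtractf sum_distrib_left mult.commute
        if_distrib[where f="\<lambda>a. _ * a"] sum.delta cong: if_cong)
  also have "\<dots> \<le> M - trans_prob E x u * \<delta>"
    using mult_left_le[OF sum_trans_prob_le_1 \<open>0 \<le> M\<close>] by simp
  finally show ?thesis .
qed

text \<open>If from every vertex of V some edge of probability at least p leads one rung down a
  ladder whose bottom rung is R, then the walk reaches R with probability at least p ^ L
  within every L consecutive steps.\<close>

lemma avoid_prob_ladder_step:
  assumes closed: "\<And>x z. x \<in> V \<Longrightarrow> E x z \<Longrightarrow> z \<in> V" and fin: "\<And>x. finite (nbrs E x)"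
    and ladder: "\<And>x. x \<in> V \<Longrightarrow> lev x > 0 \<Longrightarrow> \<exists>u. E x u \<and> lev u = lev x - 1 \<and> p \<le> trans_prob E x u"
    and R: "\<And>x. x \<in> V \<Longrightarrow> x \<in> R \<longleftrightarrow> lev x = 0" and "0 \<le> p"
    and M: "\<And>x. x \<in> V \<Longrightarrow> avoid_prob E R m x \<le> M" "0 \<le> M"
  shows "x \<in> V \<Longrightarrow> lev x \<le> j \<Longrightarrow> avoid_prob E R (m + j) x \<le> M * (1 - p ^ lev x)"
proof (induction j arbitrary: x)
  case 0 then show ?case using R avoid_prob_in by fastforce
next
  case (Suc j)
  show ?case
  proof (cases "lev x = 0")
    case True then show ?thesis using R Suc.prems avoid_prob_in by fastforce
  next
    case False
    then have "x \<notin> R" using R Suc.prems by auto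
    obtain u where u: "E x u" "lev u = lev x - 1" "p \<le> trans_prob E x u"
      using ladder[of x] Suc.prems False by auto
    have "u \<in> V" using closed Suc.prems u by blast
    moreover have "lev u \<le> j" using u Suc.prems by simp
    ultimately have u_deficit: "avoid_prob E R (m + j) u \<le> M - M * p ^ (lev x - 1)"
      using Suc.IH[of u] u(2) by (simp add: right_diff_distrib)
    have le_M: "avoid_prob E R (m + j) z \<le> M" if "z \<in> V" for z
      using potential_decay[where E=E and R=R and F="\<lambda>t. avoid_prob E R (m + t)" and g="\<lambda>_. M"
          and \<theta>=1 and n=j, OF closed _ _ _ _ _ _ that] M
      by (simp add: avoid_prob_in average_le)
    have "avoid_prob E R (Suc (m + j)) x \<le> M - trans_prob E x u * (M * p ^ (lev x - 1))"
      by (rule avoid_prob_Suc_le_deficit[OF \<open>x \<notin> R\<close> fin u(1) le_M u_deficit M(2)])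
         (use closed Suc.prems in \<open>auto simp: nbrs_def\<close>)
    also have "\<dots> \<le> M - p * (M * p ^ (lev x - 1))"
      using u(3) M(2) \<open>0 \<le> p\<close> by (intro diff_left_mono mult_right_mono) auto
    also have "\<dots> = M * (1 - p ^ lev x)"
      using False by (cases "lev x") (auto simp: algebra_simps)
    finally show ?thesis by simp
  qed
qed

lemma avoid_prob_ladder:
  assumes closed: "\<And>x z. x \<in> V \<Longrightarrow> E x z \<Longrightarrow> z \<in> V" and fin: "\<And>x. finite (nbrs E x)"
    and ladder: "\<And>x. x \<in> V \<Longrightarrow> lev x > 0 \<Longrightarrow> \<exists>u. E x u \<and> lev u = lev x - 1 \<and> p \<le> trans_prob E x u"
    and R: "\<And>x. x \<in> V \<Longrightarrow> x \<in> R \<longleftrightarrow> lev x = 0" and p: "0 \<le> p" "p \<le> 1"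
    and L: "\<And>x. x \<in> V \<Longrightarrow> lev x \<le> L"
  shows "x \<in> V \<Longrightarrow> avoid_prob E R (r + L * k) x \<le> (1 - p ^ L) ^ k"
proof (induction k arbitrary: x)
  case 0 then show ?case using avoid_prob_le_1 by simp
next
  case (Suc k)
  have pL: "0 \<le> 1 - p ^ L" using p by (simp add: power_le_one)
  have "avoid_prob E R (r + L * k + L) x \<le> (1 - p ^ L) ^ k * (1 - p ^ lev x)"
    by (rule avoid_prob_ladder_step[OF closed fin ladder R p(1) Suc.IH]) (use Suc.prems L pL in auto)
  also have "\<dots> \<le> (1 - p ^ L) ^ k * (1 - p ^ L)"
    using Suc.prems L p pL by (intro mult_left_mono) (auto intro: power_decreasing)
  finally show ?case by (simp add: algebra_simps)
qed

section \<open>The (d+1)-regular tree\<close>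

lemma tree_vert_Nil [simp]: "tree_vert d []"
  by (simp add: tree_vert_def)

lemma tree_vert_Cons: "tree_vert d (a # v) \<longleftrightarrow> (if v = [] then a \<le> d else a < d \<and> tree_vert d v)"
  by (cases v) (auto simp: tree_vert_def)

lemma tree_vert_appendD: "tree_vert d (p @ b) \<Longrightarrow> tree_vert d b"
  by (induction p) (auto simp: tree_vert_Cons split: if_splits)

lemma tree_vert_append: "tree_vert d b \<Longrightarrow> set p \<subseteq> {..<d} \<Longrightarrow> tree_vert d (p @ b)"
  by (induction p) (auto simp: tree_vert_Cons)

lemma tree_vert_nth_le: "tree_vert d v \<Longrightarrow> i < length v \<Longrightarrow> v ! i \<le> d"
  using nth_mem by (cases v rule: rev_cases) (fastforce simp: tree_vert_def nth_append less_Suc_eq)+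

lemma tree_vert_nth_less: "tree_vert d v \<Longrightarrow> i < length v - 1 \<Longrightarrow> v ! i < d"
  by (cases v rule: rev_cases) (auto simp: tree_vert_def nth_append)

lemma tree_edge_sym: "tree_edge d u v = tree_edge d v u"
  by (auto simp: tree_edge_def)

lemma tree_edgeE:
  assumes "tree_edge d x z"
  obtains a where "z = a # x" | a where "x = a # z"
  using assms by (auto simp: tree_edge_def)

lemma tree_nbrs:
  "tree_vert d x \<Longrightarrow> nbrs (tree_edge d) x =
     (if x = [] then (\<lambda>a. [a]) ` {..d} else insert (tl x) ((\<lambda>a. a # x) ` {..<d}))"
  by (cases x) (auto simp: nbrs_def tree_edge_def tree_vert_Cons image_iff split: if_splits)

lemma tree_nbrs_not_vert: "\<not> tree_vert d x \<Longrightarrow> nbrs (tree_edge d) x = {}"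
  by (auto simp: nbrs_def tree_edge_def)

lemma finite_tree_nbrs: "finite (nbrs (tree_edge d) x)"
  by (cases "tree_vert d x") (auto simp: tree_nbrs tree_nbrs_not_vert)

lemma tl_notin_children: "x \<noteq> [] \<Longrightarrow> tl x \<notin> (\<lambda>a. a # x) ` A"
  by (auto dest: arg_cong[of _ _ length])

lemma card_tree_nbrs: "tree_vert d x \<Longrightarrow> card (nbrs (tree_edge d) x) = Suc d"
  by (cases "x = []") (simp_all add: tree_nbrs card_image inj_on_def tl_notin_children)

lemma relpowp_tree_edge_up: "tree_vert d (p @ b) \<Longrightarrow> (tree_edge d ^^ length p) (p @ b) b"
proof (induction p)
  case (Cons a p)
  then have "tree_vert d (p @ b)" by (auto simp: tree_vert_Cons split: if_splits)
  moreover have "tree_edge d (a # p @ b) (p @ b)" using Cons.prems calculation by (auto simp: tree_edge_def)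
  ultimately have "(tree_edge d ^^ Suc (length p)) (a # p @ b) b" using Cons.IH by (blast intro: relpowp_Suc_I2)
  then show ?case by simp
qed simp

lemma relpowp_tree_edge_down: "tree_vert d (p @ b) \<Longrightarrow> (tree_edge d ^^ length p) b (p @ b)"
proof (induction p)
  case (Cons a p)
  then have "tree_vert d (p @ b)" by (auto simp: tree_vert_Cons split: if_splits)
  moreover have "tree_edge d (p @ b) (a # p @ b)" using Cons.prems calculation by (auto simp: tree_edge_def)
  ultimately have "(tree_edge d ^^ Suc (length p)) b (a # p @ b)" using Cons.IH by (blast intro: relpowp_Suc_I)
  then show ?case by simp
qed simp

lemma relpowp_tree_edge_length: "(tree_edge d ^^ k) x y \<Longrightarrow> length y \<le> length x + k"
proof (induction k arbitrary: y)
  case (Suc k)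
  then obtain z where "(tree_edge d ^^ k) x z" "tree_edge d z y" by auto
  then show ?case using Suc.IH by (fastforce simp: tree_edge_def)
qed simp

lemma graph_dist_le: "(E ^^ k) x y \<Longrightarrow> graph_dist E x y \<le> k"
  unfolding graph_dist_def by (rule Least_le)

lemma graph_dist_root: "tree_vert d v \<Longrightarrow> graph_dist (tree_edge d) [] v = length v"
proof -
  assume "tree_vert d v"
  then have path: "(tree_edge d ^^ length v) [] v" using relpowp_tree_edge_down[of d v "[]"] by simp
  have "(tree_edge d ^^ graph_dist (tree_edge d) [] v) [] v"
    unfolding graph_dist_def by (rule LeastI[of _ "length v"]) (rule path)
  then show ?thesis using graph_dist_le[OF path] relpowp_tree_edge_length by fastforce
qed

lemma ball_vert_iff: "ball_vert d N v \<longleftrightarrow> tree_vert d v \<and> length v \<le> N"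
  by (auto simp: ball_vert_def graph_dist_root)

fun common_prefix_length :: "'a list \<Rightarrow> 'a list \<Rightarrow> nat" where
  "common_prefix_length (a # r) (b # t) = (if a = b then Suc (common_prefix_length r t) else 0)"
| "common_prefix_length _ _ = 0"

lemma common_prefix_length_le: "common_prefix_length r t \<le> min (length r) (length t)"
  by (induction r t rule: common_prefix_length.induct) auto

lemma common_prefix_length_sym: "common_prefix_length r t = common_prefix_length t r"
  by (induction r t rule: common_prefix_length.induct) auto

lemma common_prefix_length_self: "common_prefix_length r r = length r"
  by (induction r) auto

lemma take_common_prefix_length:
  "take (common_prefix_length r t) r = take (common_prefix_length r t) t"
  by (induction r t rule: common_prefix_length.induct) auto

lemma common_prefix_length_ge:
  "k \<le> length r \<Longrightarrow> k \<le> length t \<Longrightarrow> take k r = take k t \<Longrightarrow> k \<le> common_prefix_length r t"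
proof (induction r t arbitrary: k rule: common_prefix_length.induct)
  case (1 a r b t)
  then show ?case by (cases k) auto
qed auto

lemma common_prefix_length_snoc:
  "common_prefix_length (r @ [a]) t =
     (if common_prefix_length r t = length r \<and> length r < length t \<and> t ! length r = a
      then Suc (length r) else common_prefix_length r t)"
proof (induction r arbitrary: t)
  case Nil then show ?case by (cases t) auto
next
  case (Cons c r) then show ?case by (cases t) auto
qed

text \<open>Vertices are lists with the root at the end, so the depth of the last common ancestor of
  x and y is the length of the common prefix of their reversals.\<close>

definition tree_dist :: "nat list \<Rightarrow> nat list \<Rightarrow> nat" where
  "tree_dist x y = length x + length y - 2 * common_prefix_length (rev x) (rev y)"

lemma tree_dist_self: "tree_dist x x = 0"
  by (simp add: tree_dist_def common_prefix_length_self)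

lemma tree_dist_Cons:
  "tree_dist (a # x) y =
     (if common_prefix_length (rev x) (rev y) = length x \<and> length x < length y \<and> rev y ! length x = a
      then tree_dist x y - 1 else tree_dist x y + 1)"
  using common_prefix_length_snoc[of "rev x" a "rev y"] common_prefix_length_le[of "rev x" "rev y"]
  by (auto simp: tree_dist_def)

lemma tree_dist_parent:
  "tree_dist x y =
     (if common_prefix_length (rev (a # x)) (rev y) = length (a # x)
      then tree_dist (a # x) y + 1 else tree_dist (a # x) y - 1)"
  using common_prefix_length_snoc[of "rev x" a "rev y"] common_prefix_length_le[of "rev x" "rev y"]
  by (auto simp: tree_dist_def)

lemma tree_dist_le_nbr: "tree_edge d x z \<Longrightarrow> tree_dist x y \<le> tree_dist z y + 1"
  by (erule tree_edgeE) (auto simp: tree_dist_Cons tree_dist_parent[of z y])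

text \<open>Here u is the next vertex on the way from x to y.\<close>

lemma tree_dist_nbrs:
  obtains u where "\<And>z. tree_edge d x z \<Longrightarrow> z \<noteq> u \<Longrightarrow> tree_dist z y = tree_dist x y + 1"
proof (cases "common_prefix_length (rev x) (rev y) = length x")
  case True
  show ?thesis
  proof (rule that[of "(rev y ! length x) # x"])
    fix z assume "tree_edge d x z" "z \<noteq> (rev y ! length x) # x"
    then show "tree_dist z y = tree_dist x y + 1"
    proof (elim tree_edgeE)
      fix a assume "x = a # z"
      then show ?thesis using True tree_dist_parent[of z y a] by simp
    qed (use True in \<open>auto simp: tree_dist_Cons\<close>)
  qed
next
  case False
  show ?thesis
  proof (rule that[of "tl x"])
    fix z assume "tree_edge d x z" "z \<noteq> tl x"
    then show "tree_dist z y = tree_dist x y + 1"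
      using False by (elim tree_edgeE) (auto simp: tree_dist_Cons)
  qed
qed

lemma sum_le_with_one_exception:
  fixes f :: "'a \<Rightarrow> real"
  assumes "finite A" "card A \<le> Suc k" "0 \<le> c"
    and "\<And>z. z \<in> A \<Longrightarrow> z \<noteq> u \<Longrightarrow> f z \<le> 2/3 * c" "\<And>z. z \<in> A \<Longrightarrow> f z \<le> 3/2 * c"
  shows "(\<Sum>z\<in>A. f z) \<le> (3/2 + 2/3 * real k) * c"
proof (cases "u \<in> A")
  case True
  have "(\<Sum>z\<in>A. f z) = f u + (\<Sum>z\<in>A - {u}. f z)" by (rule sum.remove[OF assms(1) True])
  also have "\<dots> \<le> 3/2 * c + real (card (A - {u})) * (2/3 * c)"
    using assms True sum_bounded_above[of "A - {u}" f "2/3 * c"] by (intro add_mono) auto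
  also have "\<dots> \<le> 3/2 * c + real k * (2/3 * c)"
    using assms True by (intro add_left_mono mult_right_mono) auto
  also have "\<dots> = (3/2 + 2/3 * real k) * c" by (simp add: algebra_simps)
  finally show ?thesis .
next
  case False
  then have "(\<Sum>z\<in>A. f z) \<le> real (card A) * (2/3 * c)"
    using assms sum_bounded_above[of A f "2/3 * c"] by auto
  also have "\<dots> \<le> (real k + 1) * (2/3 * c)"
    using assms(2,3) by (intro mult_right_mono) auto
  also have "\<dots> \<le> (3/2 + 2/3 * real k) * c"
    using assms(3) by (simp add: algebra_simps)
  finally show ?thesis .
qed

text \<open>The average over d+1 neighbours when one of them may carry a factor 3/2 and the others carry a
  factor 2/3; it is below 1 as soon as d \<ge> 2.\<close>

definition contraction_rate :: "nat \<Rightarrow> real" where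
  "contraction_rate d = (4 * real d + 9) / (6 * (real d + 1))"

lemma contraction_rate_bounds: "d \<ge> 2 \<Longrightarrow> 2/3 \<le> contraction_rate d \<and> contraction_rate d \<le> 17/18"
  by (auto simp: contraction_rate_def field_simps)

lemma average_le_contraction_rate:
  assumes "\<And>z. trans_prob E x z = (if E x z then 1 / (real d + 1) else 0)" "finite (nbrs E x)"
    "card (nbrs E x) \<le> Suc d" "0 \<le> c"
    "\<And>z. E x z \<Longrightarrow> z \<noteq> u \<Longrightarrow> f z \<le> 2/3 * c" "\<And>z. E x z \<Longrightarrow> f z \<le> 3/2 * c"
  shows "(\<Sum>z\<in>nbrs E x. trans_prob E x z * f z) \<le> contraction_rate d * c"
proof -
  have "(\<Sum>z\<in>nbrs E x. trans_prob E x z * f z) = (\<Sum>z\<in>nbrs E x. f z) / (real d + 1)"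
    using assms(1) by (simp add: nbrs_def sum_divide_distrib)
  also have "\<dots> \<le> (3/2 + 2/3 * real d) * c / (real d + 1)"
    using assms by (intro divide_right_mono sum_le_with_one_exception) (auto simp: nbrs_def)
  also have "\<dots> = contraction_rate d * c" by (simp add: contraction_rate_def field_simps)
  finally show ?thesis .
qed

lemma tree_trans_prob_eq:
  "tree_vert d x \<Longrightarrow> trans_prob (tree_edge d) x z = (if tree_edge d x z then 1 / (real d + 1) else 0)"
  by (simp add: trans_prob_eq card_tree_nbrs)

lemma pow_two_thirds_le: "e \<le> k + 1 \<Longrightarrow> (2/3::real) ^ k \<le> 3/2 * (2/3) ^ e"
  using power_decreasing[of e "k + 1" "2/3::real"] by simp

lemma tree_potential:
  assumes "tree_vert d x"
  shows "(\<Sum>z\<in>nbrs (tree_edge d) x. trans_prob (tree_edge d) x z * (2/3) ^ tree_dist z y)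
           \<le> contraction_rate d * (2/3) ^ tree_dist x y"
proof -
  obtain u where "\<And>z. tree_edge d x z \<Longrightarrow> z \<noteq> u \<Longrightarrow> tree_dist z y = tree_dist x y + 1"
    using tree_dist_nbrs by blast
  then show ?thesis
    using assms finite_tree_nbrs card_tree_nbrs tree_dist_le_nbr pow_two_thirds_le
    by (intro average_le_contraction_rate[where u=u]) (auto simp: tree_trans_prob_eq)
qed

theorem tree_rw_prob_le_exp:
  assumes "d \<ge> 2"
  shows "\<exists>c>0. \<forall>n y0 y. tree_vert d y0 \<and> tree_vert d y \<longrightarrow>
           rw_prob (tree_edge d) n y0 y \<le> exp (- c * real n)"
proof (intro exI conjI allI impI)
  define \<theta> where "\<theta> = contraction_rate d"
  have \<theta>: "0 < \<theta>" "\<theta> < 1" using contraction_rate_bounds[OF assms] by (auto simp: \<theta>_def)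
  then show "0 < - ln \<theta>" by simp
  fix n y0 y assume "tree_vert d y0 \<and> tree_vert d y"
  then have "rw_prob (tree_edge d) n y0 y \<le> \<theta> ^ n * (2/3) ^ tree_dist y0 y"
    using \<theta> tree_potential[of d _ y]
    by (intro potential_decay[where V="{v. tree_vert d v}" and R="{}" and E="tree_edge d"
          and F="\<lambda>t v. rw_prob (tree_edge d) t v y" and g="\<lambda>v. (2/3) ^ tree_dist v y"])
       (auto simp: \<theta>_def tree_dist_self tree_edge_def)
  also have "\<dots> \<le> \<theta> ^ n" using \<theta> by (simp add: power_le_one mult_left_le)
  also have "\<dots> = exp (- (- ln \<theta>) * real n)" using \<theta> by (simp add: exp_ln ln_realpow[symmetric] mult.commute)
  finally show "rw_prob (tree_edge d) n y0 y \<le> exp (- (- ln \<theta>) * real n)" .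
qed

section \<open>A logarithmic cut-off height\<close>

text \<open>With K = cutoff_level d n the climb probability (d+1)^-K stays above n^-0.99, while
  d^K \<ge> n^(0.99 * 5/8) / d beats n^(3/5), because ln d / ln (d+1) \<ge> 5/8 for d \<ge> 2.\<close>

definition cutoff_level :: "nat \<Rightarrow> nat \<Rightarrow> nat" where
  "cutoff_level d n = nat \<lfloor>(99/100) * ln (real n) / ln (real d + 1)\<rfloor>"

lemma one_le_ln_Suc: "d \<ge> 2 \<Longrightarrow> 1 \<le> ln (real d + 1)"
  using exp_le ln_ge_iff[of "real d + 1" 1] by simp

lemma cutoff_level_bounds:
  assumes "d \<ge> 2" "n \<ge> 1"
  shows "real (cutoff_level d n) \<le> (99/100) * ln (real n) / ln (real d + 1)"
    and "(99/100) * ln (real n) / ln (real d + 1) - 1 \<le> real (cutoff_level d n)"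
  using assms one_le_ln_Suc[OF assms(1)] unfolding cutoff_level_def by auto

lemma cutoff_level_le_ln: "d \<ge> 2 \<Longrightarrow> n \<ge> 1 \<Longrightarrow> real (cutoff_level d n) \<le> ln (real n)"
proof -
  assume d: "d \<ge> 2" and n: "n \<ge> 1"
  have "(99/100) * ln (real n) / ln (real d + 1) \<le> (99/100) * ln (real n) / 1"
    using one_le_ln_Suc[OF d] n d by (intro divide_left_mono) auto
  then show ?thesis using cutoff_level_bounds(1)[OF d n] n d by auto
qed

lemma cutoff_pow_le: "d \<ge> 2 \<Longrightarrow> n \<ge> 1 \<Longrightarrow> (real d + 1) ^ cutoff_level d n \<le> real n powr (99/100)"
proof -
  assume d: "d \<ge> 2" and n: "n \<ge> 1"
  have "real (cutoff_level d n) * ln (real d + 1)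
      \<le> (99/100) * ln (real n) / ln (real d + 1) * ln (real d + 1)"
    using cutoff_level_bounds(1)[OF d n] one_le_ln_Suc[OF d] by (intro mult_right_mono) auto
  then have "real (cutoff_level d n) * ln (real d + 1) \<le> (99/100) * ln (real n)"
    using one_le_ln_Suc[OF d] d by simp
  then have "exp (real (cutoff_level d n) * ln (real d + 1)) \<le> exp ((99/100) * ln (real n))" by simp
  then show ?thesis using n by (simp add: ln_realpow[symmetric] powr_def)
qed

lemma ln_ratio_ge: "d \<ge> 2 \<Longrightarrow> 5/8 * ln (real d + 1) \<le> ln (real d)"
proof -
  assume d: "d \<ge> 2"
  have "(2 * (real d + 1)) ^ 5 \<le> (3 * real d) ^ 5" using d by (intro power_mono) auto
  then have "32 * (real d + 1) ^ 5 \<le> 243 * real d ^ 5" by (simp only: power_mult_distrib) simp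
  moreover have "8 * real d ^ 5 \<le> real d ^ 3 * real d ^ 5"
    using d power_mono[of 2 "real d" 3] by (intro mult_right_mono) auto
  then have "8 * real d ^ 5 \<le> real d ^ 8" by (simp add: power_add[symmetric])
  moreover have "0 \<le> real d ^ 5" by simp
  ultimately have "(real d + 1) ^ 5 \<le> real d ^ 8" by linarith
  then have "ln ((real d + 1) ^ 5) \<le> ln (real d ^ 8)" using d by simp
  then show ?thesis using d by (simp add: ln_realpow)
qed

lemma cutoff_pow_ge: "d \<ge> 2 \<Longrightarrow> n \<ge> 1 \<Longrightarrow> 1 / real d ^ cutoff_level d n \<le> real d * real n powr (-99/160)"
proof -
  assume d: "d \<ge> 2" and n: "n \<ge> 1"
  have "5/8 \<le> ln (real d) / ln (real d + 1)"
    using ln_ratio_ge[OF d] one_le_ln_Suc[OF d] d by (subst pos_le_divide_eq) auto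
  then have "(99/100) * ln (real n) * (5/8) \<le> (99/100) * ln (real n) * (ln (real d) / ln (real d + 1))"
    using n by (intro mult_left_mono) auto
  then have "(99/160) * ln (real n) \<le> (99/100) * ln (real n) / ln (real d + 1) * ln (real d)"
    by simp
  also have "\<dots> \<le> (real (cutoff_level d n) + 1) * ln (real d)"
    using cutoff_level_bounds(2)[OF d n] d by (intro mult_right_mono) auto
  finally have "exp ((99/160) * ln (real n)) \<le> exp (real (cutoff_level d n) * ln (real d) + ln (real d))"
    by (simp add: algebra_simps)
  then have "real n powr (99/160) \<le> real d ^ cutoff_level d n * real d"
    using n d by (simp only: exp_add exp_of_nat_mult exp_ln powr_def) simp
  moreover have "0 < real n powr (99/160)" "0 < real d ^ cutoff_level d n" using n d by auto
  ultimately show ?thesis by (simp add: powr_minus_divide field_simps)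
qed

lemma eventually_cutoff_level_ge: "d \<ge> 2 \<Longrightarrow> eventually (\<lambda>n. M \<le> cutoff_level d n) sequentially"
proof -
  assume d: "d \<ge> 2"
  have "filterlim (\<lambda>n::nat. ln (real n)) at_top sequentially"
    by (rule filterlim_compose[OF ln_at_top filterlim_real_sequentially])
  then have "eventually (\<lambda>n. (real M + 1) * ln (real d + 1) * (100/99) \<le> ln (real n)) sequentially"
    unfolding filterlim_at_top by blast
  with eventually_ge_at_top[of 1] show ?thesis
  proof eventually_elim
    case (elim n)
    have "real M + 1 \<le> (99/100) * ln (real n) / ln (real d + 1)"
      using elim(2) one_le_ln_Suc[OF d] d by (subst pos_le_divide_eq) auto
    then show ?case using cutoff_level_bounds(2)[OF d elim(1)] by linarith
  qed
qed

lemma one_minus_pow_le_exp: "0 \<le> x \<Longrightarrow> x \<le> 1 \<Longrightarrow> (1 - x) ^ q \<le> exp (- real q * x)"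
  using power_mono[OF exp_ge_add_one_self[of "- x"], of q] by (simp add: exp_of_nat_mult[symmetric])

lemma climb_failure_le:
  assumes d: "d \<ge> 2" and n: "n \<ge> 2" "n \<le> 2 * m" and K: "1 \<le> K" "K \<le> cutoff_level d n"
  shows "(1 - (1 / (real d + 1)) ^ K) ^ (m div K)
           \<le> exp (- (real n / (2 * ln (real n)) - 1) / real n powr (99/100))"
proof -
  have "ln (real n) > 0" using n by simp
  have "real m = real (m div K) * real K + real (m mod K)"
    by (metis of_nat_add of_nat_mult div_mult_mod_eq)
  then have "real m < (real (m div K) + 1) * real K"
    using mod_less_divisor[of K m] K by (simp add: algebra_simps)
  then have "real m / real K < real (m div K) + 1"
    using K by (simp add: pos_divide_less_eq)
  moreover have "real n / (2 * ln (real n)) \<le> real m / ln (real n)"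
    using n \<open>ln (real n) > 0\<close> by (simp add: field_simps)
  moreover have "real m / ln (real n) \<le> real m / real K"
    using cutoff_level_le_ln[OF d, of n] K n by (intro divide_left_mono) auto
  ultimately have q: "real n / (2 * ln (real n)) - 1 \<le> real (m div K)" by linarith
  have "(real d + 1) ^ K \<le> real n powr (99/100)"
    using cutoff_pow_le[OF d, of n] n K power_increasing[of K "cutoff_level d n" "real d + 1"] by simp
  then have x: "1 / real n powr (99/100) \<le> (1 / (real d + 1)) ^ K"
    using n by (simp add: power_one_over frac_le)
  have "(1 - (1 / (real d + 1)) ^ K) ^ (m div K) \<le> exp (- real (m div K) * (1 / (real d + 1)) ^ K)"
    by (rule one_minus_pow_le_exp) (auto simp: power_le_one)
  also have "\<dots> \<le> exp (- ((real n / (2 * ln (real n)) - 1) * (1 / real n powr (99/100))))"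
    using mult_mono[OF q x] by (subst exp_le_cancel_iff) (simp add: mult_minus_left)
  finally show ?thesis by (simp add: minus_divide_left)
qed

lemma eventually_climb_failure_small:
  "eventually (\<lambda>n::nat. exp (- (real n / (2 * ln (real n)) - 1) / real n powr (99/100))
                         \<le> real n powr (-3/5) / 2) sequentially"
  by real_asymp

section \<open>The graph G\<lozenge>\<close>

definition dia_lift :: "nat \<times> (nat \<Rightarrow> nat) \<Rightarrow> nat \<times> (nat \<Rightarrow> nat)" where
  "dia_lift y = (Suc (fst y), \<lambda>i. snd y (Suc i))"

lemma dia_vert_lift: "dia_vert d y \<Longrightarrow> dia_vert d (dia_lift y)"
proof -
  assume y: "dia_vert d y"
  have "{i. snd y (Suc i) \<noteq> 1} = Suc -` {i. snd y i \<noteq> 1}" by auto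
  moreover have "finite (Suc -` {i. snd y i \<noteq> 1})"
    using y by (intro finite_vimageI) (auto simp: dia_vert_def)
  ultimately show ?thesis using y by (auto simp: dia_vert_def dia_lift_def)
qed

lemma dia_edge_lift: "dia_vert d y \<Longrightarrow> dia_edge d y (dia_lift y)"
  using dia_vert_lift by (auto simp: dia_edge_def dia_up_def dia_lift_def)

lemma dia_nbrs_subset:
  "nbrs (dia_edge d) y \<subseteq> insert (dia_lift y) ((\<lambda>a. (fst y - 1, case_nat a (snd y))) ` {1..d})"
proof
  fix z assume "z \<in> nbrs (dia_edge d) y"
  then have z: "dia_vert d z" "dia_up y z \<or> dia_up z y" by (auto simp: nbrs_def dia_edge_def)
  show "z \<in> insert (dia_lift y) ((\<lambda>a. (fst y - 1, case_nat a (snd y))) ` {1..d})"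
    using z(2)
  proof
    assume "dia_up y z"
    then show ?thesis by (cases z) (auto simp: dia_up_def dia_lift_def)
  next
    assume up: "dia_up z y"
    then have "snd z = case_nat (snd z 0) (snd y)" by (auto simp: dia_up_def split: nat.split)
    moreover have "snd z 0 \<in> {1..d}" using z(1) by (auto simp: dia_vert_def)
    ultimately show ?thesis using up by (cases z) (auto simp: dia_up_def)
  qed
qed

lemma finite_dia_nbrs: "finite (nbrs (dia_edge d) y)"
  by (rule finite_subset[OF dia_nbrs_subset]) auto

lemma card_dia_nbrs_le: "card (nbrs (dia_edge d) y) \<le> Suc d"
proof -
  have "card (nbrs (dia_edge d) y)
      \<le> card (insert (dia_lift y) ((\<lambda>a. (fst y - 1, case_nat a (snd y))) ` {1..d}))"
    by (rule card_mono[OF _ dia_nbrs_subset]) auto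
  also have "\<dots> \<le> Suc (card ((\<lambda>a. (fst y - 1, case_nat a (snd y))) ` {1..d}))"
    by (rule card_insert_le_m1) auto
  also have "\<dots> \<le> Suc d" using card_image_le[of "{1..d}"] by simp
  finally show ?thesis .
qed

lemma dia_trans_prob_lift: "dia_vert d y \<Longrightarrow> 1 / (real d + 1) \<le> trans_prob (dia_edge d) y (dia_lift y)"
  using trans_prob_ge[OF dia_edge_lift finite_dia_nbrs card_dia_nbrs_le] by (simp add: add.commute)

text \<open>F j permutes the digit at absolute height j, the height of digit i of (k;s) being k + i.\<close>

definition dia_relabel :: "(nat \<Rightarrow> nat \<Rightarrow> nat) \<Rightarrow> nat \<times> (nat \<Rightarrow> nat) \<Rightarrow> nat \<times> (nat \<Rightarrow> nat)" where
  "dia_relabel F y = (fst y, \<lambda>i. F (fst y + i) (snd y i))"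

locale digit_involution =
  fixes F :: "nat \<Rightarrow> nat \<Rightarrow> nat" and d L :: nat
  assumes involutive: "F j (F j c) = c"
    and range: "1 \<le> c \<Longrightarrow> c \<le> d \<Longrightarrow> 1 \<le> F j c \<and> F j c \<le> d"
    and above: "L \<le> j \<Longrightarrow> F j c = c"
begin

lemma dia_relabel_involutive: "dia_relabel F (dia_relabel F y) = y"
  by (simp add: dia_relabel_def involutive)

lemma dia_vert_relabel: "dia_vert d (dia_relabel F y) = dia_vert d y"
proof -
  have one: "dia_vert d (dia_relabel F z)" if "dia_vert d z" for z
  proof -
    have "{i. F (fst z + i) (snd z i) \<noteq> 1} \<subseteq> {i. snd z i \<noteq> 1} \<union> {..<L}"
      using above by (auto simp: not_less)
    then show ?thesis using that range by (auto simp: dia_vert_def dia_relabel_def intro: finite_subset)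
  qed
  show ?thesis using one[of y] one[of "dia_relabel F y"] dia_relabel_involutive by auto
qed

lemma dia_edge_relabel: "dia_edge d (dia_relabel F a) (dia_relabel F b) = dia_edge d a b"
proof -
  have "dia_up (dia_relabel F a) (dia_relabel F b) = dia_up a b" for a b
    by (auto simp: dia_up_def dia_relabel_def) (metis involutive)
  then show ?thesis by (simp add: dia_edge_def dia_vert_relabel)
qed

end

definition prepend :: "'a list \<Rightarrow> (nat \<Rightarrow> 'a) \<Rightarrow> nat \<Rightarrow> 'a" where
  "prepend p t i = (if i < length p then p ! i else t (i - length p))"

lemma prepend_inj:
  assumes "length p = length q" "prepend p t = prepend q t"
  shows "p = q"
proof (rule nth_equalityI)
  show "p ! i = q ! i" if "i < length p" for i
    using that assms(1) fun_cong[OF assms(2), of i] by (simp add: prepend_def)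
qed (rule assms(1))

lemma dia_relabel_prefix:
  assumes y: "dia_vert d y" and "fst y \<le> L" and p: "set p \<subseteq> {1..d}" "length p = L - fst y"
  obtains \<sigma> where "\<And>a. \<sigma> (\<sigma> a) = a" "\<And>a b. dia_edge d (\<sigma> a) (\<sigma> b) = dia_edge d a b"
    "\<And>x. L \<le> fst x \<Longrightarrow> \<sigma> x = x" "\<sigma> y = (fst y, prepend p (\<lambda>i. snd y (i + (L - fst y))))"
proof -
  define h where "h = fst y"
  define F where "F = (\<lambda>j. if h \<le> j \<and> j < L then transpose (snd y (j - h)) (p ! (j - h)) else id)"
  interpret digit_involution F d L
  proof
    show "1 \<le> F j c \<and> F j c \<le> d" if "1 \<le> c" "c \<le> d" for j c
    proof (cases "h \<le> j \<and> j < L")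
      case True
      then have "j - h < length p" using p(2) unfolding h_def by arith
      then have "p ! (j - h) \<in> {1..d}" using p(1) nth_mem by blast
      then show ?thesis using True that y by (auto simp: F_def transpose_def dia_vert_def)
    qed (use that in \<open>auto simp: F_def\<close>)
  qed (auto simp: F_def)
  show ?thesis
  proof (rule that[of "dia_relabel F"])
    show "dia_relabel F (dia_relabel F a) = a" for a by (rule dia_relabel_involutive)
    show "dia_edge d (dia_relabel F a) (dia_relabel F b) = dia_edge d a b" for a b
      by (rule dia_edge_relabel)
    show "L \<le> fst x \<Longrightarrow> dia_relabel F x = x" for x by (cases x) (auto simp: dia_relabel_def F_def)
    have "F (h + i) (snd y i) = prepend p (\<lambda>i. snd y (i + (L - h))) i" for i
      using p by (cases "i < L - h") (auto simp: F_def prepend_def h_def)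
    then show "dia_relabel F y = (fst y, prepend p (\<lambda>i. snd y (i + (L - fst y))))"
      by (simp add: dia_relabel_def h_def)
  qed
qed

text \<open>The d ^ (L - fst y) vertices at the height of y that agree with y from height L on are images
  of y under automorphisms fixing x.\<close>

lemma dia_rw_prob_le_depth:
  assumes "d \<ge> 1" and y: "dia_vert d y" and "fst y \<le> L" "L \<le> fst x"
  shows "rw_prob (dia_edge d) n x y \<le> 1 / real d ^ (L - fst y)"
proof -
  define P where "P = {p. set p \<subseteq> {1..d} \<and> length p = L - fst y}"
  define W where "W = (\<lambda>p. (fst y, prepend p (\<lambda>i. snd y (i + (L - fst y))))) ` P"
  have "finite P" unfolding P_def by (rule finite_lists_length_eq) simp
  then have "finite W" by (simp add: W_def)
  have "inj_on (\<lambda>p. (fst y, prepend p (\<lambda>i. snd y (i + (L - fst y))))) P"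
    by (auto simp: inj_on_def P_def intro: prepend_inj)
  then have "card W = d ^ (L - fst y)"
    using card_lists_length_eq[of "{1..d}" "L - fst y"] by (simp add: W_def P_def card_image)
  moreover have "real (card W) * rw_prob (dia_edge d) n x y \<le> (\<Sum>w\<in>W. rw_prob (dia_edge d) n x w)"
  proof (rule card_mult_rw_prob_le[OF \<open>finite W\<close> order_refl])
    fix w assume "w \<in> W"
    then obtain p where "p \<in> P" "w = (fst y, prepend p (\<lambda>i. snd y (i + (L - fst y))))"
      by (auto simp: W_def)
    moreover from \<open>p \<in> P\<close> have p: "set p \<subseteq> {1..d}" "length p = L - fst y" by (auto simp: P_def)
    obtain \<sigma> where "\<And>a. \<sigma> (\<sigma> a) = a" "\<And>a b. dia_edge d (\<sigma> a) (\<sigma> b) = dia_edge d a b"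
      "\<And>x. L \<le> fst x \<Longrightarrow> \<sigma> x = x" "\<sigma> y = (fst y, prepend p (\<lambda>i. snd y (i + (L - fst y))))"
      using dia_relabel_prefix[OF y \<open>fst y \<le> L\<close> p] by blast
    ultimately show "\<exists>\<sigma>. (\<forall>a. \<sigma> (\<sigma> a) = a) \<and> (\<forall>a b. dia_edge d (\<sigma> a) (\<sigma> b) = dia_edge d a b) \<and>
                 \<sigma> x = x \<and> \<sigma> y = w"
      using \<open>L \<le> fst x\<close> by metis
  qed
  ultimately have "real d ^ (L - fst y) * rw_prob (dia_edge d) n x y \<le> 1"
    using sum_rw_prob_le_1[OF \<open>finite W\<close>, of "dia_edge d" n x] by simp
  then show ?thesis using \<open>d \<ge> 1\<close> by (simp add: field_simps)
qed

text \<open>Either the walk climbs to height L, where it sees the symmetry bound, or it avoids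
  height L, which the edge upwards (of probability at least 1/(d+1)) makes unlikely.\<close>

lemma dia_rw_prob_le:
  assumes d: "d \<ge> 1" and y: "dia_vert d y" and x: "dia_vert d x" and "fst y \<le> L" "L \<ge> 1"
  shows "rw_prob (dia_edge d) n x y \<le> 1 / real d ^ (L - fst y) + (1 - (1 / (real d + 1)) ^ L) ^ (n div L)"
proof -
  define R where "R = {v :: nat \<times> (nat \<Rightarrow> nat). fst v \<ge> L}"
  have on_R: "rw_prob (dia_edge d) t v y \<le> 1 / real d ^ (L - fst y)" if "v \<in> R" for v t
  proof (cases "dia_vert d v")
    case True then show ?thesis using dia_rw_prob_le_depth d y \<open>fst y \<le> L\<close> that by (simp add: R_def)
  next
    case False
    then have "nbrs (dia_edge d) v = {}" by (auto simp: nbrs_def dia_edge_def)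
    then show ?thesis using False y rw_prob_isolated by fastforce
  qed
  have "rw_prob (dia_edge d) n x y \<le> 1 / real d ^ (L - fst y) + avoid_prob (dia_edge d) R n x"
    by (rule le_plus_avoid_prob[where F="\<lambda>t v. rw_prob (dia_edge d) t v y"])
       (auto simp: rw_prob_le_1 on_R)
  also have "avoid_prob (dia_edge d) R n x = avoid_prob (dia_edge d) R (n mod L + L * (n div L)) x"
    by simp
  also have "\<dots> \<le> (1 - (1 / (real d + 1)) ^ L) ^ (n div L)"
  proof (rule avoid_prob_ladder[where V="{v. dia_vert d v}" and lev="\<lambda>v. L - fst v"])
    fix v assume "v \<in> {v. dia_vert d v}" "0 < L - fst v"
    then show "\<exists>u. dia_edge d v u \<and> L - fst u = L - fst v - 1 \<and> 1 / (real d + 1) \<le> trans_prob (dia_edge d) v u"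
      using dia_edge_lift[of d v] dia_trans_prob_lift[of d v]
      by (intro exI[of _ "dia_lift v"]) (auto simp: dia_lift_def)
  qed (use x in \<open>auto simp: R_def dia_edge_def finite_dia_nbrs\<close>)
  finally show ?thesis by simp
qed

lemma dia_rw_prob_eventually_le:
  assumes d: "d \<ge> 2"
  shows "eventually (\<lambda>n. \<forall>x y. dia_vert d x \<and> dia_vert d y \<and> fst y = h \<longrightarrow>
           rw_prob (dia_edge d) n x y \<le> real n powr (-3/5)) sequentially"
proof -
  have "eventually (\<lambda>n::nat. 2 * real d ^ (h + 1) \<le> real n powr (3/160)) sequentially"
    using filterlim_compose[OF real_powr_at_top[of "3/160"] filterlim_real_sequentially]
    by (simp add: filterlim_at_top)
  with eventually_cutoff_level_ge[OF d, of "h + 1"] eventually_ge_at_top[of 2]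
    eventually_climb_failure_small
  show ?thesis
  proof eventually_elim
    case (elim n)
    define K where "K = cutoff_level d n"
    have n: "n \<ge> 1" "0 < real n powr (3/5)" "0 < real n powr (3/160)" using elim by auto
    have "1 / real d ^ (K - h) = real d ^ h * (1 / real d ^ K)"
      using elim d by (simp add: K_def power_diff)
    also have "\<dots> \<le> real d ^ h * (real d * real n powr (-99/160))"
      using cutoff_pow_ge[OF d n(1)] by (intro mult_left_mono) (auto simp: K_def)
    also have "\<dots> = real d ^ (h + 1) / (real n powr (3/5) * real n powr (3/160))"
      by (simp add: powr_minus_divide powr_add[symmetric])
    also have "\<dots> \<le> real n powr (-3/5) / 2"
      using elim(4) n by (simp add: powr_minus_divide field_simps)
    finally have symmetry_term: "1 / real d ^ (K - h) \<le> real n powr (-3/5) / 2" .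
    show ?case
    proof (intro allI impI)
      fix x y assume "dia_vert d x \<and> dia_vert d y \<and> fst y = h"
      then have "rw_prob (dia_edge d) n x y \<le> 1 / real d ^ (K - h) + (1 - (1 / (real d + 1)) ^ K) ^ (n div K)"
        using dia_rw_prob_le[of d y x K n] d elim by (auto simp: K_def)
      also have "(1 - (1 / (real d + 1)) ^ K) ^ (n div K) \<le> real n powr (-3/5) / 2"
        using climb_failure_le[OF d elim(2), of n K] elim(1,3) by (auto simp: K_def)
      finally show "rw_prob (dia_edge d) n x y \<le> real n powr (-3/5)"
        using symmetry_term by simp
    qed
  qed
qed

text \<open>The height-dependent constants only have to cover the finitely many n before the bound
  of the previous lemma takes over.\<close>

theorem dia_rw_prob_le_powr:
  assumes d: "d \<ge> 2"
  shows "\<exists>c>0. \<exists>C C' :: nat \<Rightarrow> real. (\<forall>h. C h > 0 \<and> C' h > 0) \<and>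
           (\<forall>n y0 y. n \<ge> 1 \<and> dia_vert d y0 \<and> dia_vert d y \<longrightarrow>
              rw_prob (dia_edge d) n y0 y \<le> real n powr (-3/5) + C (fst y) * exp (- C' (fst y) * real n powr c))"
proof -
  obtain N where N: "\<And>h n x y. n \<ge> N h \<Longrightarrow> dia_vert d x \<Longrightarrow> dia_vert d y \<Longrightarrow> fst y = h \<Longrightarrow>
                      rw_prob (dia_edge d) n x y \<le> real n powr (-3/5)"
    using dia_rw_prob_eventually_le[OF d] unfolding eventually_sequentially by metis
  have "rw_prob (dia_edge d) n y0 y \<le> real n powr (-3/5) + exp (real (N (fst y))) * exp (- 1 * real n powr 1)"
    if "n \<ge> 1" "dia_vert d y0" "dia_vert d y" for n y0 y
  proof (cases "n \<ge> N (fst y)")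
    case True
    then show ?thesis using N[of "fst y" n y0 y] that by (simp add: add_increasing2)
  next
    case False
    then have "1 \<le> exp (real (N (fst y))) * exp (- 1 * real n powr 1)"
      using that by (simp add: exp_minus[symmetric] exp_add[symmetric] del: exp_le_one_iff)
    then show ?thesis using rw_prob_le_1[of "dia_edge d" n y0 y] by (simp add: add_increasing)
  qed
  then show ?thesis
    by (intro exI[of _ 1] conjI exI[of _ "\<lambda>h. exp (real (N h))"] exI[of _ "\<lambda>h. 1"]) auto
qed

section \<open>Balls in the tree\<close>

lemma ball_edge_iff: "ball_edge d N u v \<longleftrightarrow> tree_edge d u v \<and> length u \<le> N \<and> length v \<le> N"
  by (auto simp: ball_edge_def ball_vert_iff tree_edge_def)

lemma ball_edge_sym: "ball_edge d N u v = ball_edge d N v u"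
  by (auto simp: ball_edge_iff tree_edge_sym)

lemma ball_nbrs_subset: "nbrs (ball_edge d N) x \<subseteq> nbrs (tree_edge d) x"
  by (auto simp: nbrs_def ball_edge_iff)

lemma finite_ball_nbrs: "finite (nbrs (ball_edge d N) x)"
  by (rule finite_subset[OF ball_nbrs_subset finite_tree_nbrs])

lemma card_ball_nbrs_le: "card (nbrs (ball_edge d N) x) \<le> Suc d"
proof (cases "tree_vert d x")
  case True
  then show ?thesis
    using card_mono[OF finite_tree_nbrs[of d x] ball_nbrs_subset[of d N x]] card_tree_nbrs by simp
next
  case False
  then show ?thesis using tree_nbrs_not_vert ball_nbrs_subset[of d N x] by auto
qed

lemma ball_nbrs_inner: "length x < N \<Longrightarrow> nbrs (ball_edge d N) x = nbrs (tree_edge d) x"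
  by (auto simp: nbrs_def ball_edge_iff tree_edge_def)

lemma ball_nbrs_leaf: "tree_vert d x \<Longrightarrow> length x = N \<Longrightarrow> N \<ge> 1 \<Longrightarrow> nbrs (ball_edge d N) x = {tl x}"
  by (cases x) (auto simp: nbrs_def ball_edge_iff tree_edge_def tree_vert_Cons split: if_splits)

lemma ball_nbrs_outside: "\<not> (tree_vert d x \<and> length x \<le> N) \<Longrightarrow> nbrs (ball_edge d N) x = {}"
  by (auto simp: nbrs_def ball_edge_iff tree_edge_def)

lemma ball_nbrs_0: "nbrs (ball_edge d 0) x = {}"
  by (auto simp: nbrs_def ball_edge_iff tree_edge_def)

lemma ball_edge_parent: "tree_vert d x \<Longrightarrow> length x \<le> N \<Longrightarrow> x \<noteq> [] \<Longrightarrow> ball_edge d N x (tl x)"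
  by (cases x) (auto simp: ball_edge_iff tree_edge_def tree_vert_Cons split: if_splits)

lemma ball_trans_prob_parent:
  "tree_vert d x \<Longrightarrow> length x \<le> N \<Longrightarrow> x \<noteq> [] \<Longrightarrow> 1 / (real d + 1) \<le> trans_prob (ball_edge d N) x (tl x)"
proof -
  assume "tree_vert d x" "length x \<le> N" "x \<noteq> []"
  then have "1 / real (Suc d) \<le> trans_prob (ball_edge d N) x (tl x)"
    by (intro trans_prob_ge ball_edge_parent finite_ball_nbrs card_ball_nbrs_le)
  then show ?thesis by (simp add: add.commute)
qed

lemma ball_rw_prob_outside:
  "\<not> (tree_vert d x \<and> length x \<le> N) \<Longrightarrow> tree_vert d y \<Longrightarrow> length y \<le> N \<Longrightarrow>
     rw_prob (ball_edge d N) t x y = 0"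
  by (metis ball_nbrs_outside rw_prob_isolated)

text \<open>The first digit of a list of length k sits at height k.\<close>

fun relabel_digits :: "(nat \<Rightarrow> nat \<Rightarrow> nat) \<Rightarrow> nat list \<Rightarrow> nat list" where
  "relabel_digits F [] = []"
| "relabel_digits F (a # v) = F (Suc (length v)) a # relabel_digits F v"

lemma length_relabel_digits [simp]: "length (relabel_digits F v) = length v"
  by (induction v) auto

lemma nth_relabel_digits: "i < length v \<Longrightarrow> relabel_digits F v ! i = F (length v - i) (v ! i)"
  by (induction v arbitrary: i) (auto simp: nth_Cons split: nat.split)

lemma relabel_digits_id: "(\<And>k c. k \<le> length x \<Longrightarrow> F k c = c) \<Longrightarrow> relabel_digits F x = x"
  by (induction x) auto

locale tree_digit_involution =
  fixes F :: "nat \<Rightarrow> nat \<Rightarrow> nat" and d :: nat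
  assumes involutive: "F k (F k c) = c"
    and range: "c \<le> d \<Longrightarrow> F k c \<le> d"
    and range_inner: "2 \<le> k \<Longrightarrow> c < d \<Longrightarrow> F k c < d"
begin

lemma relabel_digits_involutive: "relabel_digits F (relabel_digits F v) = v"
  by (induction v) (auto simp: involutive)

lemma tree_vert_relabel_digits: "tree_vert d (relabel_digits F v) = tree_vert d v"
proof -
  have "tree_vert d (relabel_digits F v)" if "tree_vert d v" for v
    using that by (induction v) (auto simp: tree_vert_Cons range range_inner Suc_le_eq split: if_splits)
  then show ?thesis by (metis relabel_digits_involutive)
qed

lemma ball_edge_relabel_digits:
  "ball_edge d N (relabel_digits F u) (relabel_digits F v) = ball_edge d N u v"
proof -
  have inj: "relabel_digits F u = relabel_digits F v \<longleftrightarrow> u = v" for u v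
    by (metis relabel_digits_involutive)
  have "(\<exists>a. relabel_digits F u = a # relabel_digits F v) \<longleftrightarrow> (\<exists>a. u = a # v)" for u v
    by (cases u) (auto simp: inj)
  then show ?thesis by (simp add: ball_edge_iff tree_edge_def tree_vert_relabel_digits)
qed

end

lemma ball_relabel:
  assumes y: "tree_vert d y" and w: "tree_vert d w" and len: "length w = length y"
    and j: "j \<le> length y" and agree: "drop (length y - j) y = drop (length y - j) w"
  obtains \<sigma> where "\<And>a. \<sigma> (\<sigma> a) = a" "\<And>a b. ball_edge d N (\<sigma> a) (\<sigma> b) = ball_edge d N a b"
    "\<sigma> y = w" "\<And>x. length x \<le> j \<Longrightarrow> \<sigma> x = x"
    "\<And>v. tree_vert d (\<sigma> v) = tree_vert d v" "\<And>v. length (\<sigma> v) = length v"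
proof -
  define l where "l = length y"
  define F where "F = (\<lambda>k. if j < k \<and> k \<le> l then transpose (y ! (l - k)) (w ! (l - k)) else id)"
  interpret tree_digit_involution F d
  proof
    show "F k c \<le> d" if "c \<le> d" for k c
      using that y w len tree_vert_nth_le[of d y "l - k"] tree_vert_nth_le[of d w "l - k"]
      by (auto simp: F_def l_def transpose_def)
    show "F k c < d" if "2 \<le> k" "c < d" for k c
      using that y w len tree_vert_nth_less[of d y "l - k"] tree_vert_nth_less[of d w "l - k"]
      by (auto simp: F_def l_def transpose_def)
  qed (simp add: F_def)
  have "relabel_digits F y = w"
  proof (rule nth_equalityI)
    fix i assume "i < length (relabel_digits F y)"
    then have i: "i < l" by (simp add: l_def)
    show "relabel_digits F y ! i = w ! i"
    proof (cases "j < l - i")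
      case False
      then have "y ! i = drop (l - j) y ! (i - (l - j))" using i by (simp add: l_def)
      also have "\<dots> = drop (l - j) w ! (i - (l - j))" using agree by (simp add: l_def)
      also have "\<dots> = w ! i" using i False len by (simp add: l_def)
      finally have "y ! i = w ! i" .
      then show ?thesis using i False by (simp add: nth_relabel_digits l_def F_def)
    qed (use i in \<open>simp add: nth_relabel_digits l_def F_def\<close>)
  qed (simp add: len)
  then show ?thesis
    by (intro that[of "relabel_digits F"] relabel_digits_involutive ball_edge_relabel_digits
        tree_vert_relabel_digits relabel_digits_id) (auto simp: F_def)
qed

lemma ball_rw_prob_reverse_le:
  "rw_prob (ball_edge d N) t x w * card (nbrs (ball_edge d N) x) \<le> (real d + 1) * rw_prob (ball_edge d N) t w x"
proof -
  have "rw_prob (ball_edge d N) t x w * card (nbrs (ball_edge d N) x)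
      = rw_prob (ball_edge d N) t w x * card (nbrs (ball_edge d N) w)"
    by (rule rw_prob_reversible[OF ball_edge_sym finite_ball_nbrs])
  also have "\<dots> \<le> rw_prob (ball_edge d N) t w x * (real d + 1)"
    using card_ball_nbrs_le[of d N w] rw_prob_nonneg by (intro mult_left_mono) auto
  finally show ?thesis by (simp add: mult.commute)
qed

definition tree_level :: "nat \<Rightarrow> nat \<Rightarrow> nat list set" where
  "tree_level d l = {v. tree_vert d v \<and> length v = l}"

definition level_mass :: "nat \<Rightarrow> nat \<Rightarrow> nat \<Rightarrow> nat list \<Rightarrow> nat \<Rightarrow> real" where
  "level_mass d N t x l = (\<Sum>w\<in>tree_level d l. rw_prob (ball_edge d N) t x w)"

lemma finite_tree_level: "finite (tree_level d l)"
proof -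
  have "tree_level d l \<subseteq> {xs. set xs \<subseteq> {..d} \<and> length xs = l}"
    by (auto simp: tree_level_def in_set_conv_nth intro: tree_vert_nth_le)
  then show ?thesis by (rule finite_subset) (rule finite_lists_length_eq, simp)
qed

lemma card_tree_level_ge: "d ^ l \<le> card (tree_level d l)"
proof -
  have "{p. set p \<subseteq> {..<d} \<and> length p = l} \<subseteq> tree_level d l"
    using tree_vert_append[of d "[]"] by (auto simp: tree_level_def)
  from card_mono[OF finite_tree_level this] show ?thesis
    using card_lists_length_eq[of "{..<d}" l] by simp
qed

lemma card_tree_level_le: "d \<ge> 1 \<Longrightarrow> real (card (tree_level d l)) \<le> 2 * real d ^ l"
proof (cases l)
  case 0
  assume "d \<ge> 1"
  have "tree_level d l = {[]}" unfolding tree_level_def using 0 by (intro set_eqI) auto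
  then show ?thesis using \<open>d \<ge> 1\<close> 0 by simp
next
  case (Suc m)
  assume d: "d \<ge> 1"
  define P where "P = {p. set p \<subseteq> {..<d} \<and> length p = m}"
  have "finite P" unfolding P_def by (rule finite_lists_length_eq) simp
  have "tree_level d l \<subseteq> (\<lambda>(p, a). p @ [a]) ` (P \<times> {..d})"
  proof
    fix v assume v: "v \<in> tree_level d l"
    then have "v \<noteq> []" using Suc by (auto simp: tree_level_def)
    then have "v = butlast v @ [last v]" by simp
    moreover have "butlast v \<in> P" "last v \<le> d"
      using v \<open>v \<noteq> []\<close> Suc by (auto simp: tree_level_def tree_vert_def P_def)
    ultimately show "v \<in> (\<lambda>(p, a). p @ [a]) ` (P \<times> {..d})" by (auto simp: image_iff)
  qed
  then have "card (tree_level d l) \<le> card ((\<lambda>(p, a). p @ [a]) ` (P \<times> {..d}))"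
    using \<open>finite P\<close> by (intro card_mono) auto
  also have "\<dots> \<le> card (P \<times> {..d})" by (rule card_image_le) (simp add: \<open>finite P\<close>)
  also have "\<dots> = d ^ m * (d + 1)"
    using card_lists_length_eq[of "{..<d}" m] by (simp add: P_def card_cartesian_product)
  finally have "real (card (tree_level d l)) \<le> real (d ^ m * (d + 1))"
    by (simp only: of_nat_le_iff)
  also have "\<dots> = real d ^ m * (real d + 1)" by (simp add: algebra_simps)
  also have "\<dots> \<le> real d ^ m * (2 * real d)" using d by (intro mult_left_mono) auto
  finally show ?thesis using Suc by (simp add: algebra_simps)
qed

lemma level_mass_le_1: "level_mass d N t x l \<le> 1"
  unfolding level_mass_def by (rule sum_rw_prob_le_1[OF finite_tree_level])

lemma level_mass_Suc:
  "level_mass d N (Suc t) v l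
     = (\<Sum>z\<in>nbrs (ball_edge d N) v. trans_prob (ball_edge d N) v z * level_mass d N t z l)"
  unfolding level_mass_def rw_prob.simps sum_distrib_left by (rule sum.swap)

lemma rw_prob_le_level_mass: "tree_vert d y \<Longrightarrow> rw_prob (ball_edge d N) t x y \<le> level_mass d N t x (length y)"
  unfolding level_mass_def
  by (intro member_le_sum finite_tree_level rw_prob_nonneg) (simp add: tree_level_def)

text \<open>Seen from below height j, the d ^ (length y - j) vertices of the level of y that agree with y
  up to height j are indistinguishable.\<close>

lemma rw_prob_le_level_mass_below:
  assumes y: "tree_vert d y" and "j \<le> length y" "length x \<le> j"
  shows "real d ^ (length y - j) * rw_prob (ball_edge d N) t x y \<le> level_mass d N t x (length y)"
proof -
  define b where "b = drop (length y - j) y"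
  define P where "P = {p. set p \<subseteq> {..<d} \<and> length p = length y - j}"
  define W where "W = (\<lambda>p. p @ b) ` P"
  have b: "tree_vert d b" "length b = j"
    using y tree_vert_appendD[of d "take (length y - j) y" b] \<open>j \<le> length y\<close> by (auto simp: b_def)
  have "inj_on (\<lambda>p. p @ b) P" by (simp add: inj_on_def)
  then have "card W = d ^ (length y - j)"
    using card_lists_length_eq[of "{..<d}" "length y - j"] by (simp add: W_def P_def card_image)
  moreover have "real (card W) * rw_prob (ball_edge d N) t x y \<le> level_mass d N t x (length y)"
    unfolding level_mass_def
  proof (rule card_mult_rw_prob_le[OF finite_tree_level])
    show "W \<subseteq> tree_level d (length y)"
      using b \<open>j \<le> length y\<close> by (auto simp: W_def P_def tree_level_def intro: tree_vert_append)
    fix w assume "w \<in> W"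
    then obtain p where p: "p \<in> P" "w = p @ b" by (auto simp: W_def)
    then have w: "tree_vert d w" "length w = length y" "drop (length y - j) y = drop (length y - j) w"
      using b \<open>j \<le> length y\<close> by (simp_all add: P_def b_def tree_vert_append)
    obtain \<sigma> where "\<And>a. \<sigma> (\<sigma> a) = a" "\<And>a b. ball_edge d N (\<sigma> a) (\<sigma> b) = ball_edge d N a b"
      "\<sigma> y = w" "\<And>x. length x \<le> j \<Longrightarrow> \<sigma> x = x"
      using ball_relabel[OF y w(1,2) \<open>j \<le> length y\<close> w(3)] by blast
    then show "\<exists>\<sigma>. (\<forall>a. \<sigma> (\<sigma> a) = a) \<and> (\<forall>a b. ball_edge d N (\<sigma> a) (\<sigma> b) = ball_edge d N a b) \<and>
                 \<sigma> x = x \<and> \<sigma> y = w"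
      using \<open>length x \<le> j\<close> by blast
  qed
  ultimately show ?thesis by simp
qed

lemma sum_level_rw_prob_eq:
  assumes "u \<in> tree_level d k" "u' \<in> tree_level d k"
  shows "(\<Sum>w\<in>tree_level d l. rw_prob (ball_edge d N) t w u') = (\<Sum>w\<in>tree_level d l. rw_prob (ball_edge d N) t w u)"
proof -
  have u: "tree_vert d u" "tree_vert d u'" "length u' = length u" "drop (length u - 0) u = drop (length u - 0) u'"
    using assms by (auto simp: tree_level_def)
  obtain \<sigma> where \<sigma>: "\<And>a. \<sigma> (\<sigma> a) = a" "\<And>a b. ball_edge d N (\<sigma> a) (\<sigma> b) = ball_edge d N a b"
    "\<sigma> u = u'" "\<And>v. tree_vert d (\<sigma> v) = tree_vert d v" "\<And>v. length (\<sigma> v) = length v"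
    using ball_relabel[OF u(1,2,3) le0 u(4), where N=N] by blast
  then have "bij_betw \<sigma> (tree_level d l) (tree_level d l)"
    by (intro bij_betw_byWitness[where f'=\<sigma>]) (auto simp: tree_level_def)
  then have "(\<Sum>w\<in>tree_level d l. rw_prob (ball_edge d N) t w u')
      = (\<Sum>w\<in>tree_level d l. rw_prob (ball_edge d N) t (\<sigma> w) (\<sigma> u))"
    unfolding \<sigma>(3)[symmetric] by (rule sum.reindex_bij_betw[symmetric])
  also have "\<dots> = (\<Sum>w\<in>tree_level d l. rw_prob (ball_edge d N) t w u)"
    using \<sigma>(1,2) by (simp add: rw_prob_involution)
  finally show ?thesis .
qed

text \<open>By reversibility the mass a leaf u sends to level l is at most d+1 times the mass level l sends
  to u, and the latter does not depend on the leaf; summing over the at least d ^ N leaves gives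
  at most 2 d ^ l.\<close>

lemma level_mass_leaf_le:
  assumes "d \<ge> 1" "N \<ge> 1" and u: "tree_vert d u" "length u = N"
  shows "level_mass d N t u l \<le> 2 * (real d + 1) * real d ^ l / real d ^ N"
proof -
  define inflow where "inflow v = (\<Sum>w\<in>tree_level d l. rw_prob (ball_edge d N) t w v)" for v
  have reverse: "level_mass d N t u l \<le> (real d + 1) * inflow u"
    unfolding level_mass_def inflow_def sum_distrib_left
  proof (rule sum_mono)
    fix w
    show "rw_prob (ball_edge d N) t u w \<le> (real d + 1) * rw_prob (ball_edge d N) t w u"
      using ball_rw_prob_reverse_le[of d N t u w] ball_nbrs_leaf[OF u \<open>N \<ge> 1\<close>] by simp
  qed
  have "inflow u' = inflow u" if "u' \<in> tree_level d N" for u'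
    unfolding inflow_def by (rule sum_level_rw_prob_eq) (use u that in \<open>auto simp: tree_level_def\<close>)
  then have "real (card (tree_level d N)) * inflow u = (\<Sum>u'\<in>tree_level d N. inflow u')" by simp
  also have "\<dots> = (\<Sum>w\<in>tree_level d l. \<Sum>u'\<in>tree_level d N. rw_prob (ball_edge d N) t w u')"
    unfolding inflow_def by (rule sum.swap)
  also have "\<dots> \<le> (\<Sum>w\<in>tree_level d l. 1)"
    by (intro sum_mono sum_rw_prob_le_1 finite_tree_level)
  also have "\<dots> = real (card (tree_level d l))" by simp
  also have "\<dots> \<le> 2 * real d ^ l" by (rule card_tree_level_le[OF \<open>d \<ge> 1\<close>])
  finally have "real (card (tree_level d N)) * inflow u \<le> 2 * real d ^ l" .
  moreover have "real d ^ N \<le> real (card (tree_level d N))"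
    using card_tree_level_ge[of d N] by (simp flip: of_nat_power)
  moreover have "0 \<le> inflow u" by (simp add: inflow_def sum_nonneg rw_prob_nonneg)
  ultimately have "real d ^ N * inflow u \<le> 2 * real d ^ l"
    using mult_right_mono order_trans by blast
  then have "inflow u \<le> 2 * real d ^ l / real d ^ N"
    using \<open>d \<ge> 1\<close> by (simp add: pos_le_divide_eq mult.commute)
  then have "(real d + 1) * inflow u \<le> (real d + 1) * (2 * real d ^ l / real d ^ N)"
    by (intro mult_left_mono) auto
  with reverse show ?thesis by (simp add: algebra_simps)
qed

lemma ball_potential:
  assumes "tree_vert d v" "length v < N"
  shows "(\<Sum>z\<in>nbrs (ball_edge d N) v. trans_prob (ball_edge d N) v z * (3/2) ^ (N - length z))
           \<le> contraction_rate d * (3/2) ^ (N - length v)"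
proof (rule average_le_contraction_rate[where u="tl v"])
  show "trans_prob (ball_edge d N) v z = (if ball_edge d N v z then 1 / (real d + 1) else 0)" for z
    using assms ball_nbrs_inner[OF assms(2)] card_tree_nbrs by (simp add: trans_prob_eq)
  show "(3/2::real) ^ (N - length z) \<le> 2/3 * (3/2) ^ (N - length v)"
    if z: "ball_edge d N v z" "z \<noteq> tl v" for z
  proof -
    obtain a where "z = a # v" using z by (auto simp: ball_edge_iff tree_edge_def)
    then have "N - length v = Suc (N - length z)" using assms by simp
    then show ?thesis by simp
  qed
  show "(3/2::real) ^ (N - length z) \<le> 3/2 * (3/2) ^ (N - length v)" if "ball_edge d N v z" for z
  proof -
    have "N - length z \<le> Suc (N - length v)" using that by (auto simp: ball_edge_iff tree_edge_def)
    then show ?thesis using power_increasing[of "N - length z" "Suc (N - length v)" "3/2::real"] by simp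
  qed
qed (use finite_ball_nbrs card_ball_nbrs_le in auto)

text \<open>Starting from x, the walk reaches the leaves at a geometric rate (the potential
  (3/2)^(N - height) contracts), and from a leaf it sees level l with the small mass above.\<close>

lemma level_mass_le:
  assumes "d \<ge> 2" "N \<ge> 1" and x: "tree_vert d x" "length x \<le> N"
  shows "level_mass d N t x l \<le> 2 * (real d + 1) * real d ^ l / real d ^ N + contraction_rate d ^ t * (3/2) ^ N"
proof -
  define V where "V = {v. tree_vert d v \<and> length v \<le> N}"
  have \<theta>: "0 \<le> contraction_rate d" using contraction_rate_bounds[OF \<open>d \<ge> 2\<close>] by simp
  have "level_mass d N t x l \<le> 2 * (real d + 1) * real d ^ l / real d ^ N
                                + avoid_prob (ball_edge d N) (tree_level d N) t x"
    using level_mass_leaf_le[of d N] assms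
    by (intro le_plus_avoid_prob[where F="\<lambda>t v. level_mass d N t v l"])
       (auto simp: level_mass_Suc level_mass_le_1 tree_level_def)
  also have "avoid_prob (ball_edge d N) (tree_level d N) t x \<le> contraction_rate d ^ t * (3/2) ^ (N - length x)"
  proof (rule potential_decay[where V=V and g="\<lambda>v. (3/2) ^ (N - length v)"])
    show "(\<Sum>z\<in>nbrs (ball_edge d N) v. trans_prob (ball_edge d N) v z * (3/2) ^ (N - length z))
            \<le> contraction_rate d * (3/2) ^ (N - length v)" if "v \<in> V" "v \<notin> tree_level d N" for v
      using that ball_potential[of d v N] by (auto simp: V_def tree_level_def)
    show "z \<in> V" if "v \<in> V" "ball_edge d N v z" for v z
      using that by (auto simp: V_def ball_edge_iff tree_edge_def)
  qed (use x \<theta> in \<open>auto simp: V_def avoid_prob_in\<close>)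
  also have "\<dots> \<le> contraction_rate d ^ t * (3/2) ^ N"
    using \<theta> by (intro mult_left_mono power_increasing) auto
  finally show ?thesis by simp
qed

lemma ball_rw_prob_le_below:
  assumes "d \<ge> 2" "N \<ge> 1" and v: "tree_vert d v" "length v \<le> j" and y: "tree_vert d y" "length y \<le> N"
    and "j \<le> length y"
  shows "rw_prob (ball_edge d N) t v y \<le> 2 * (real d + 1) * real d ^ j / real d ^ N + contraction_rate d ^ t * (3/2) ^ N"
proof -
  define k where "k = length y - j"
  have pos: "1 \<le> real d ^ k" "0 \<le> contraction_rate d"
    using assms contraction_rate_bounds[OF \<open>d \<ge> 2\<close>] by auto
  have "real d ^ k * rw_prob (ball_edge d N) t v y
      \<le> 2 * (real d + 1) * real d ^ (j + k) / real d ^ N + contraction_rate d ^ t * (3/2) ^ N"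
    using rw_prob_le_level_mass_below[OF y(1) \<open>j \<le> length y\<close> v(2), of N t]
      level_mass_le[OF \<open>d \<ge> 2\<close> \<open>N \<ge> 1\<close> v(1), of t "length y"] assms
    by (simp add: k_def)
  also have "\<dots> = real d ^ k * (2 * (real d + 1) * real d ^ j / real d ^ N)
                 + 1 * (contraction_rate d ^ t * (3/2) ^ N)"
    by (simp add: power_add)
  also have "\<dots> \<le> real d ^ k * (2 * (real d + 1) * real d ^ j / real d ^ N)
                 + real d ^ k * (contraction_rate d ^ t * (3/2) ^ N)"
    using pos by (intro add_left_mono mult_right_mono) auto
  finally have "real d ^ k * rw_prob (ball_edge d N) t v y
      \<le> real d ^ k * (2 * (real d + 1) * real d ^ j / real d ^ N + contraction_rate d ^ t * (3/2) ^ N)"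
    by (simp only: distrib_left)
  then show ?thesis using pos(1) \<open>d \<ge> 2\<close> by (subst (asm) mult_le_cancel_left_pos) auto
qed

lemma pow_ratio_le: "d \<ge> 1 \<Longrightarrow> j + K \<le> N \<Longrightarrow> real d ^ j / real d ^ N \<le> 1 / real d ^ K"
  using power_increasing[of "j + K" N "real d"] by (simp add: power_add field_simps)

lemma ball_rw_prob_le_near_root:
  assumes "d \<ge> 2" "N \<ge> 1" "length v \<le> j" and y: "tree_vert d y" "length y \<le> N"
    and "j \<le> length y" "j + K \<le> N"
  shows "rw_prob (ball_edge d N) t v y \<le> 2 * (real d + 1) / real d ^ K + contraction_rate d ^ t * (3/2) ^ N"
proof (cases "tree_vert d v")
  case True
  have "2 * (real d + 1) * (real d ^ j / real d ^ N) \<le> 2 * (real d + 1) * (1 / real d ^ K)"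
    using pow_ratio_le[of d j K N] assms by (intro mult_left_mono) auto
  then show ?thesis using ball_rw_prob_le_below[OF assms(1,2) True assms(3) y assms(6), of t] by simp
next
  case False
  then show ?thesis
    using ball_rw_prob_outside[of d v N y] y contraction_rate_bounds[OF \<open>d \<ge> 2\<close>] by simp
qed

lemma ball_avoid_prob_le:
  assumes x: "tree_vert d x" "length x \<le> N" and "N \<le> j + K"
  shows "avoid_prob (ball_edge d N) {v. length v \<le> j} k x \<le> (1 - (1 / (real d + 1)) ^ K) ^ (k div K)"
proof -
  have "avoid_prob (ball_edge d N) {v. length v \<le> j} k x
      = avoid_prob (ball_edge d N) {v. length v \<le> j} (k mod K + K * (k div K)) x"
    by simp
  also have "\<dots> \<le> (1 - (1 / (real d + 1)) ^ K) ^ (k div K)"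
  proof (rule avoid_prob_ladder[where V="{v. tree_vert d v \<and> length v \<le> N}" and lev="\<lambda>v. length v - j"])
    fix v assume "v \<in> {v. tree_vert d v \<and> length v \<le> N}" "0 < length v - j"
    moreover from this have "v \<noteq> []" by auto
    ultimately show "\<exists>u. ball_edge d N v u \<and> length u - j = length v - j - 1 \<and>
                         1 / (real d + 1) \<le> trans_prob (ball_edge d N) v u"
      using ball_edge_parent[of d v N] ball_trans_prob_parent[of d v N] by (intro exI[of _ "tl v"]) auto
  qed (use assms in \<open>auto simp: ball_edge_iff tree_edge_def finite_ball_nbrs\<close>)
  finally show ?thesis .
qed

text \<open>If length y + K \<le> N, the level of y receives little mass once the walk has spread out
  towards the leaves. Otherwise it suffices that the walk visits height N - K, where the vertices
  of the level of y sharing the ancestor of y at height N - K are alike; from anywhere in the ball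
  this is at most K steps towards the root away.\<close>

lemma ball_rw_prob_le_mixing:
  assumes d: "d \<ge> 2" and K: "1 \<le> K" "K \<le> N"
    and x: "tree_vert d x" "length x \<le> N" and y: "tree_vert d y" "length y \<le> N"
  shows "rw_prob (ball_edge d N) n x y \<le> 2 * (real d + 1) / real d ^ K + contraction_rate d ^ (n div 2) * (3/2) ^ N
           + (1 - (1 / (real d + 1)) ^ K) ^ ((n - n div 2) div K)"
proof -
  have \<theta>: "0 \<le> contraction_rate d" "contraction_rate d \<le> 1" using contraction_rate_bounds[OF d] by auto
  have tail: "0 \<le> (1 - (1 / (real d + 1)) ^ K) ^ ((n - n div 2) div K)" by (simp add: power_le_one)
  have \<theta>_mono: "contraction_rate d ^ t \<le> contraction_rate d ^ (n div 2)" if "n div 2 \<le> t" for t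
    using \<theta> that by (intro power_decreasing) auto
  show ?thesis
  proof (cases "length y + K \<le> N")
    case True
    have "rw_prob (ball_edge d N) n x y \<le> level_mass d N n x (length y)"
      by (rule rw_prob_le_level_mass[OF y(1)])
    also have "\<dots> \<le> 2 * (real d + 1) * real d ^ length y / real d ^ N + contraction_rate d ^ n * (3/2) ^ N"
      using level_mass_le[OF d _ x] K by simp
    also have "\<dots> \<le> 2 * (real d + 1) / real d ^ K + contraction_rate d ^ (n div 2) * (3/2) ^ N"
      using pow_ratio_le[OF _ True, of d] d \<theta>_mono[of n]
      by (intro add_mono mult_right_mono) (auto simp: divide_simps)
    finally show ?thesis using tail by linarith
  next
    case False
    define j where "j = N - K"
    define T where "T = n div 2"
    define c where "c = 2 * (real d + 1) / real d ^ K + contraction_rate d ^ T * (3/2) ^ N"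
    have j: "j \<le> length y" "j + K = N" using False K by (auto simp: j_def)
    have "0 \<le> c" using \<theta> by (simp add: c_def)
    have on_R: "rw_prob (ball_edge d N) (T + t) v y \<le> c" if "length v \<le> j" for v t
    proof -
      have "rw_prob (ball_edge d N) (T + t) v y
          \<le> 2 * (real d + 1) / real d ^ K + contraction_rate d ^ (T + t) * (3/2) ^ N"
        using ball_rw_prob_le_near_root[OF d _ that y j(1)] j(2) K by simp
      also have "\<dots> \<le> c"
        unfolding c_def using \<theta>_mono[of "T + t"] by (intro add_left_mono mult_right_mono) (auto simp: T_def)
      finally show ?thesis .
    qed
    have "rw_prob (ball_edge d N) (T + (n - T)) x y \<le> c + avoid_prob (ball_edge d N) {v. length v \<le> j} (n - T) x"
      by (rule le_plus_avoid_prob[where F="\<lambda>t v. rw_prob (ball_edge d N) (T + t) v y"])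
         (auto simp: rw_prob_le_1 on_R \<open>0 \<le> c\<close>)
    also have "\<dots> \<le> c + (1 - (1 / (real d + 1)) ^ K) ^ ((n - T) div K)"
      using ball_avoid_prob_le[OF x] j by simp
    finally show ?thesis by (simp add: c_def T_def)
  qed
qed

lemma tree_edge_append_exit: "tree_edge d (q @ b) z \<Longrightarrow> (\<exists>q'. z = q' @ b) \<or> length z < length b"
  by (erule tree_edgeE) (auto simp: append_eq_Cons_conv)

text \<open>The walk from x reaches y only after leaving the branch of x below the last common
  ancestor of x and y, at which moment it is at the height of that ancestor.\<close>

lemma ball_rw_prob_le_branch:
  assumes "d \<ge> 1" and x: "tree_vert d x" "length x \<le> N" and y: "tree_vert d y" "length y \<le> N"
  shows "rw_prob (ball_edge d N) n x y \<le> 1 / real d ^ (length y - common_prefix_length (rev x) (rev y))"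
proof -
  define m where "m = common_prefix_length (rev x) (rev y)"
  have m: "m \<le> length x" "m \<le> length y" using common_prefix_length_le[of "rev x" "rev y"] by (auto simp: m_def)
  have below: "rw_prob (ball_edge d N) t v y \<le> 1 / real d ^ (length y - m)" if "length v \<le> m" for v t
  proof (cases "tree_vert d v")
    case True
    have "real d ^ (length y - m) * rw_prob (ball_edge d N) t v y \<le> 1"
      using rw_prob_le_level_mass_below[OF y(1) m(2) that] level_mass_le_1 order_trans by blast
    then show ?thesis using \<open>d \<ge> 1\<close> by (simp add: field_simps)
  next
    case False
    then show ?thesis using ball_rw_prob_outside[of d v N y] y by simp
  qed
  show ?thesis
  proof (cases "m < length x \<and> m < length y")
    case False
    then show ?thesis using below[of x n] m rw_prob_le_1[of _ n x y] by (auto simp: m_def)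
  next
    case True
    define branch where "branch = drop (length x - Suc m) x"
    have "length branch = Suc m" using True by (simp add: branch_def)
    show ?thesis
    proof (rule rw_prob_le_exit_bound[where R="{v. length v \<le> m}" and \<Omega>="{v. \<exists>q. v = q @ branch}"])
      show "y \<notin> {v. \<exists>q. v = q @ branch}"
      proof
        assume "y \<in> {v. \<exists>q. v = q @ branch}"
        then have "take (Suc m) (rev x) = take (Suc m) (rev y)"
          using \<open>length branch = Suc m\<close> by (auto simp: branch_def take_rev)
        then have "Suc m \<le> m" using True common_prefix_length_ge[of "Suc m" "rev x" "rev y"] by (simp add: m_def)
        then show False by simp
      qed
      show "z \<in> {v. \<exists>q. v = q @ branch} \<or> z \<in> {v. length v \<le> m}"
        if "v \<in> {v. \<exists>q. v = q @ branch}" "ball_edge d N v z" for v z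
        using that tree_edge_append_exit[of d _ branch z] \<open>length branch = Suc m\<close>
        by (auto simp: ball_edge_iff)
      show "x \<in> {v. \<exists>q. v = q @ branch}" by (auto simp: branch_def intro: exI[of _ "take (length x - Suc m) x"])
    qed (use below in \<open>auto simp: m_def\<close>)
  qed
qed

lemma graph_dist_le_tree_dist:
  assumes "tree_vert d x" "tree_vert d y"
  shows "graph_dist (tree_edge d) x y \<le> tree_dist x y"
proof -
  define m where "m = common_prefix_length (rev x) (rev y)"
  have m: "m \<le> length x" "m \<le> length y" using common_prefix_length_le[of "rev x" "rev y"] by (auto simp: m_def)
  define b where "b = drop (length x - m) x"
  have "rev b = take m (rev y)"
    using take_common_prefix_length[of "rev x" "rev y"] by (simp add: b_def take_rev m_def)
  then have "drop (length y - m) y = b" by (simp add: take_rev flip: rev_swap)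
  then have "y = take (length y - m) y @ b" by (metis append_take_drop_id)
  moreover have "x = take (length x - m) x @ b" by (simp add: b_def)
  ultimately have "(tree_edge d ^^ (length x - m)) x b" "(tree_edge d ^^ (length y - m)) b y"
    using assms m relpowp_tree_edge_up[of d "take (length x - m) x" b]
      relpowp_tree_edge_down[of d "take (length y - m) y" b]
    by auto
  then have "(tree_edge d ^^ (length x - m + (length y - m))) x y"
    by (auto simp: relpowp_add)
  then show ?thesis using m by (auto simp: tree_dist_def m_def dest: graph_dist_le)
qed

lemma exp_one_fifth_le_2: "exp (1/5 :: real) \<le> 2"
proof -
  have "exp (1/5 :: real) ^ 5 = exp 1" by (simp flip: exp_of_nat_mult)
  also have "\<dots> \<le> 2 ^ 5" using exp_le by simp
  finally show ?thesis by (subst (asm) power_mono_iff) auto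
qed

lemma min_one_pow_le_exp:
  assumes "d \<ge> 2"
  shows "min 1 ((real d + 1) / real d ^ M) \<le> exp (1 - real M / 5)"
proof (cases "M \<le> 5")
  case True
  then show ?thesis by (simp add: min.coboundedI1)
next
  case False
  define q where "q = real d * exp (- (1/5))"
  have "1 \<le> q" using exp_one_fifth_le_2 assms by (simp add: q_def exp_minus field_simps)
  have "real d + 1 \<le> real d * 2" using assms by simp
  also have "\<dots> \<le> real d * real d ^ 4"
    using assms power_mono[of 2 "real d" 4] by (intro mult_left_mono) auto
  also have "\<dots> = real d ^ 5" by (simp add: eval_nat_numeral)
  also have "\<dots> = exp 1 * q ^ 5"
    using exp_of_nat_mult[of 5 "- (1/5) :: real", symmetric] by (simp add: q_def power_mult_distrib exp_minus)
  also have "\<dots> \<le> exp 1 * q ^ M" using \<open>1 \<le> q\<close> False by (intro mult_left_mono power_increasing) auto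
  also have "\<dots> = real d ^ M * (exp 1 * exp (- (real M / 5)))"
    by (simp add: q_def power_mult_distrib flip: exp_of_nat_mult)
  also have "\<dots> = real d ^ M * exp (1 - real M / 5)"
    by (metis diff_conv_add_uminus exp_add)
  finally show ?thesis using assms by (simp add: min.coboundedI2 pos_divide_le_eq mult.commute)
qed

lemma ball_rw_prob_le_exp_dist:
  assumes d: "d \<ge> 2" and x: "tree_vert d x" "length x \<le> N" and y: "tree_vert d y" "length y \<le> N"
  shows "rw_prob (ball_edge d N) n x y \<le> exp 1 * exp (- (1/10) * real (graph_dist (tree_edge d) x y))"
proof -
  define p where "p = rw_prob (ball_edge d N) n x y"
  define m where "m = common_prefix_length (rev x) (rev y)"
  have p: "0 \<le> p" "p \<le> 1" by (simp_all add: p_def rw_prob_nonneg rw_prob_le_1)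
  have "p \<le> 1 / real d ^ (length y - m)"
    using ball_rw_prob_le_branch[of d x N y n] assms by (simp add: p_def m_def)
  then have up: "p \<le> (real d + 1) / real d ^ (length y - m)"
    by (rule order_trans) (simp add: divide_right_mono)
  have down: "p \<le> (real d + 1) / real d ^ (length x - m)"
  proof (cases "x = []")
    case True
    then show ?thesis using p by simp
  next
    case False
    then have "1 \<le> card (nbrs (ball_edge d N) x)"
      using ball_edge_parent[OF x False] finite_ball_nbrs[of d N x]
      by (metis One_nat_def Suc_leI card_gt_0_iff empty_iff mem_Collect_eq nbrs_def)
    then have "p \<le> p * card (nbrs (ball_edge d N) x)" using p by (simp add: mult_le_cancel_left1)
    also have "\<dots> \<le> (real d + 1) * rw_prob (ball_edge d N) n y x"
      unfolding p_def by (rule ball_rw_prob_reverse_le)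
    also have "\<dots> \<le> (real d + 1) * (1 / real d ^ (length x - m))"
      using ball_rw_prob_le_branch[of d y N x n] assms
      by (intro mult_left_mono) (auto simp: m_def common_prefix_length_sym)
    finally show ?thesis by simp
  qed
  define M where "M = max (length y - m) (length x - m)"
  have "p \<le> min 1 ((real d + 1) / real d ^ M)"
    using up down p by (auto simp: M_def max_def)
  also have "\<dots> \<le> exp (1 - real M / 5)" by (rule min_one_pow_le_exp[OF d])
  also have "\<dots> \<le> exp (1 - real (graph_dist (tree_edge d) x y) / 10)"
    using graph_dist_le_tree_dist[OF x(1) y(1)] by (simp add: tree_dist_def m_def M_def)
  finally show ?thesis by (simp add: p_def mult_exp_exp)
qed

lemma eventually_mixing_small:
  "eventually (\<lambda>n::nat. (17/18) powr (real n / 2 - 1) * (3/2) powr (real n powr (1/3)) \<le> real n powr (-3/5))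
     sequentially"
  by real_asymp

lemma mixing_term_le:
  assumes "d \<ge> 2" "N ^ 3 < n"
    and small: "(17/18) powr (real n / 2 - 1) * (3/2) powr (real n powr (1/3)) \<le> real n powr (-3/5)"
  shows "contraction_rate d ^ (n div 2) * (3/2) ^ N \<le> real n powr (-3/5)"
proof -
  have \<theta>: "0 \<le> contraction_rate d" "contraction_rate d \<le> 17/18"
    using contraction_rate_bounds[OF assms(1)] by auto
  have "contraction_rate d ^ (n div 2) \<le> (17/18) ^ (n div 2)" using \<theta> by (intro power_mono) auto
  also have "\<dots> = (17/18) powr real (n div 2)" by (simp add: powr_realpow)
  also have "\<dots> \<le> (17/18) powr (real n / 2 - 1)"
  proof (rule powr_mono')
    have "real n \<le> 2 * real (n div 2) + 1" by linarith
    then show "real n / 2 - 1 \<le> real (n div 2)" by linarith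
  qed auto
  finally have rate: "contraction_rate d ^ (n div 2) \<le> (17/18) powr (real n / 2 - 1)" .
  have "real N ^ 3 < real n" using assms(2) by (metis of_nat_less_iff of_nat_power)
  then have "(real N ^ 3) powr (1/3) \<le> real n powr (1/3)" by (intro powr_mono2) auto
  moreover have "(real N ^ 3) powr (1/3) = real N"
  proof (cases "N = 0")
    case False
    then have "real N powr (3::real) = real N ^ 3" using powr_realpow[of "real N" 3] by simp
    then have "(real N ^ 3) powr (1/3) = (real N powr (3::real)) powr (1/3)" by simp
    also have "\<dots> = real N" by (simp only: powr_powr) simp
    finally show ?thesis .
  qed simp
  ultimately have "real N \<le> real n powr (1/3)" by simp
  then have "(3/2) powr real N \<le> (3/2::real) powr (real n powr (1/3))" by (intro powr_mono) auto
  then have "(3/2::real) ^ N \<le> (3/2) powr (real n powr (1/3))" by (simp add: powr_realpow)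
  with rate \<theta> have "contraction_rate d ^ (n div 2) * (3/2) ^ N
      \<le> (17/18) powr (real n / 2 - 1) * (3/2) powr (real n powr (1/3))"
    by (intro mult_mono) auto
  with small show ?thesis by linarith
qed

lemma cutoff_term_le:
  assumes "d \<ge> 2" "n \<ge> 1"
  shows "1 / real d ^ min N (cutoff_level d n) \<le> real d powr (- real N) + real d * real n powr (-3/5)"
proof (cases "N \<le> cutoff_level d n")
  case True
  then show ?thesis using assms by (simp add: powr_minus_divide powr_realpow)
next
  case False
  have "1 / real d ^ cutoff_level d n \<le> real d * real n powr (-99/160)" by (rule cutoff_pow_ge[OF assms])
  also have "\<dots> \<le> real d * real n powr (-3/5)" using assms by (intro mult_left_mono powr_mono) auto
  finally show ?thesis using False by (simp add: add_increasing)
qed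

lemma ball_rw_prob_eventually_le:
  assumes d: "d \<ge> 2"
  defines "C \<equiv> 2 * (real d + 1) * real d + 2"
  shows "eventually (\<lambda>n. \<forall>N x y. 1 \<le> N \<and> N ^ 3 < n \<and> tree_vert d x \<and> length x \<le> N \<and>
           tree_vert d y \<and> length y \<le> N \<longrightarrow>
           rw_prob (ball_edge d N) n x y \<le> C * (real d powr (- real N) + real n powr (-3/5))) sequentially"
  using eventually_cutoff_level_ge[OF d, of 1] eventually_ge_at_top[of 2]
    eventually_climb_failure_small eventually_mixing_small
proof eventually_elim
  case (elim n)
  show ?case
  proof (intro allI impI, elim conjE)
    fix N x y
    assume N: "1 \<le> N" "N ^ 3 < n" and xy: "tree_vert d x" "length x \<le> N" "tree_vert d y" "length y \<le> N"
    define K where "K = min N (cutoff_level d n)"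
    have K: "1 \<le> K" "K \<le> N" "K \<le> cutoff_level d n" using N elim(1) by (auto simp: K_def)
    have "n \<le> 2 * (n - n div 2)" by simp
    then have climb: "(1 - (1 / (real d + 1)) ^ K) ^ ((n - n div 2) div K) \<le> real n powr (-3/5) / 2"
      using climb_failure_le[OF d elim(2) _ K(1,3)] elim(3) by fastforce
    have "rw_prob (ball_edge d N) n x y \<le> 2 * (real d + 1) * (1 / real d ^ K)
            + contraction_rate d ^ (n div 2) * (3/2) ^ N + (1 - (1 / (real d + 1)) ^ K) ^ ((n - n div 2) div K)"
      using ball_rw_prob_le_mixing[OF d K(1,2) xy] by simp
    also have "\<dots> \<le> 2 * (real d + 1) * (real d powr (- real N) + real d * real n powr (-3/5))
                     + real n powr (-3/5) + real n powr (-3/5) / 2"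
      using cutoff_term_le[OF d, of n N] mixing_term_le[OF d N(2) elim(4)] elim climb
      by (intro add_mono mult_left_mono) (auto simp: K_def)
    also have "\<dots> \<le> C * (real d powr (- real N) + real n powr (-3/5))"
      using d by (simp add: C_def algebra_simps mult_right_mono)
    finally show "rw_prob (ball_edge d N) n x y \<le> C * (real d powr (- real N) + real n powr (-3/5))" .
  qed
qed

lemma rw_prob_le_powr_ratio:
  assumes "1 \<le> n" "n \<le> n0" "0 \<le> a"
  shows "rw_prob E n x y \<le> real n0 powr a * real n powr (- a)"
proof -
  have "rw_prob E n x y \<le> real n powr a * real n powr (- a)"
    using rw_prob_le_1 assms(1) by (simp flip: powr_add)
  also have "\<dots> \<le> real n0 powr a * real n powr (- a)"
    using assms by (intro mult_right_mono powr_mono2) auto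
  finally show ?thesis .
qed

text \<open>Before the bound of the previous lemma sets in, the trivial bound 1 is absorbed into the
  constant.\<close>

lemma ball_rw_prob_le_long_time:
  assumes d: "d \<ge> 2"
  shows "\<exists>c2>0. \<forall>N n x y. tree_vert d x \<and> length x \<le> N \<and> tree_vert d y \<and> length y \<le> N \<and> N ^ 3 < n \<longrightarrow>
           rw_prob (ball_edge d N) n x y \<le> c2 * (real d powr (- real N) + real n powr (-3/5))"
proof -
  define C where "C = 2 * (real d + 1) * real d + 2"
  obtain n0 where n0: "\<forall>n\<ge>n0. \<forall>N x y. 1 \<le> N \<and> N ^ 3 < n \<and> tree_vert d x \<and> length x \<le> N \<and>
      tree_vert d y \<and> length y \<le> N \<longrightarrow>
      rw_prob (ball_edge d N) n x y \<le> C * (real d powr (- real N) + real n powr (-3/5))"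
    using ball_rw_prob_eventually_le[OF d, folded C_def] unfolding eventually_sequentially
    by (elim exE) (rule that)
  define c2 where "c2 = C + real n0 powr (3/5)"
  have "0 < C" using d by (simp add: C_def add_pos_nonneg)
  then have "0 < c2" by (simp add: c2_def add_pos_nonneg)
  have "rw_prob (ball_edge d N) n x y \<le> c2 * (real d powr (- real N) + real n powr (-3/5))"
    if "tree_vert d x" "length x \<le> N" "tree_vert d y" "length y \<le> N" "N ^ 3 < n" for N n x y
  proof -
    have "n \<ge> 1" using that(5) by (cases n) auto
    have pos: "0 < real n powr (-3/5)" "0 \<le> real d powr (- real N)" using \<open>n \<ge> 1\<close> by auto
    consider "N = 0" | "N \<ge> 1" "n \<ge> n0" | "n < n0" by linarith
    then show ?thesis
    proof cases
      case 1
      then have "rw_prob (ball_edge d N) n x y = 0"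
        using \<open>n \<ge> 1\<close> ball_nbrs_0[of d x] by (cases n) auto
      then show ?thesis using \<open>0 < c2\<close> pos by simp
    next
      case 2
      then have "rw_prob (ball_edge d N) n x y \<le> C * (real d powr (- real N) + real n powr (-3/5))"
        using n0 that by simp
      also have "\<dots> \<le> c2 * (real d powr (- real N) + real n powr (-3/5))"
        using pos by (intro mult_right_mono) (auto simp: c2_def)
      finally show ?thesis .
    next
      case 3
      then have "rw_prob (ball_edge d N) n x y \<le> real n0 powr (3/5) * real n powr (- (3/5))"
        using \<open>n \<ge> 1\<close> by (intro rw_prob_le_powr_ratio) auto
      also have "\<dots> \<le> c2 * (real d powr (- real N) + real n powr (-3/5))"
        using \<open>0 < C\<close> pos by (intro mult_mono) (auto simp: c2_def)
      finally show ?thesis .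
    qed
  qed
  then show ?thesis using \<open>0 < c2\<close> by blast
qed

theorem ball_rw_prob_le:
  "\<exists>c>0. \<forall>d::nat. d \<ge> 2 \<longrightarrow>
     (\<exists>c1>0. \<exists>c2>0. \<forall>N n y0 y. ball_vert d N y0 \<and> ball_vert d N y \<longrightarrow>
        rw_prob (ball_edge d N) n y0 y
          \<le> c * exp (- c1 * real (graph_dist (tree_edge d) y0 y)) * (if n \<le> N ^ 3 then 1 else 0)
            + c2 * (real d powr (- real N) + real n powr (-3/5)) * (if n > N ^ 3 then 1 else 0))"
proof (rule exI[of _ "exp 1"], intro conjI allI impI)
  fix d :: nat assume d: "d \<ge> 2"
  obtain c2 where "c2 > 0" and long_time: "\<forall>N n x y. tree_vert d x \<and> length x \<le> N \<and> tree_vert d y \<and>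
      length y \<le> N \<and> N ^ 3 < n \<longrightarrow> rw_prob (ball_edge d N) n x y \<le> c2 * (real d powr (- real N) + real n powr (-3/5))"
    using ball_rw_prob_le_long_time[OF d] by (elim exE conjE) (rule that)
  have "rw_prob (ball_edge d N) n y0 y
          \<le> exp 1 * exp (- (1/10) * real (graph_dist (tree_edge d) y0 y)) * (if n \<le> N ^ 3 then 1 else 0)
            + c2 * (real d powr (- real N) + real n powr (-3/5)) * (if n > N ^ 3 then 1 else 0)"
    if "ball_vert d N y0" "ball_vert d N y" for N n y0 y
    using that long_time ball_rw_prob_le_exp_dist[OF d, of y0 N y n] by (auto simp: ball_vert_iff)
  then show "\<exists>c1>0. \<exists>c2>0. \<forall>N n y0 y. ball_vert d N y0 \<and> ball_vert d N y \<longrightarrow>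
        rw_prob (ball_edge d N) n y0 y
          \<le> exp 1 * exp (- c1 * real (graph_dist (tree_edge d) y0 y)) * (if n \<le> N ^ 3 then 1 else 0)
            + c2 * (real d powr (- real N) + real n powr (-3/5)) * (if n > N ^ 3 then 1 else 0)"
    using \<open>c2 > 0\<close> by (intro exI[of _ "1/10"] exI[of _ c2] conjI allI impI) auto
qed simp

theorem lemma7p5:
  shows
   "(\<forall>d::nat. d \<ge> 2 \<longrightarrow>
      (\<exists>c>0. \<forall>n y0 y. tree_vert d y0 \<and> tree_vert d y \<longrightarrow>
          rw_prob (tree_edge d) n y0 y \<le> exp (- c * real n)))
    \<and>
    (\<forall>d::nat. d \<ge> 2 \<longrightarrow>
      (\<exists>c>0. \<exists>C C' :: nat \<Rightarrow> real. (\<forall>h. C h > 0 \<and> C' h > 0) \<and>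
         (\<forall>n y0 y. n \<ge> 1 \<and> dia_vert d y0 \<and> dia_vert d y \<longrightarrow>
            rw_prob (dia_edge d) n y0 y
              \<le> real n powr (-3/5) + C (fst y) * exp (- C' (fst y) * real n powr c))))
    \<and>
    (\<exists>c>0. \<forall>d::nat. d \<ge> 2 \<longrightarrow>
      (\<exists>c1>0. \<exists>c2>0. \<forall>N n y0 y. ball_vert d N y0 \<and> ball_vert d N y \<longrightarrow>
          rw_prob (ball_edge d N) n y0 y
            \<le> c * exp (- c1 * real (graph_dist (tree_edge d) y0 y)) * (if n \<le> N ^ 3 then 1 else 0)
              + c2 * (real d powr (- real N) + real n powr (-3/5)) * (if n > N ^ 3 then 1 else 0)))"
  using tree_rw_prob_le_exp dia_rw_prob_le_powr ball_rw_prob_le by (intro conjI allI impI) auto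

end
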